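(* Under the standing assumptions on $f$, let $\ell>0$, $\beta=\ell d$, let $x_1,\dots,x_d$ be i.i.d. with density $f^\beta/N(\beta)$ and, independently, $y_1,\dots,y_d$ i.i.d. $N(0,(\beta|H|)^{-1})$. Then $$W(d):=\sum_{i=1}^d\frac{\beta\,h'''(0)}{6}\left(y_i^3-x_i^3\right)$$ converges weakly as $d\to\infty$ to $$N\left(-\frac{15\,h'''(0)^2}{36\,\ell\,|H|^3},\ \frac{30\,h'''(0)^2}{36\,\ell\,|H|^3}\right).$$
   Context: Standing assumptions: $f:\mathbb{R}\to(0,\infty)$ is an unnormalised univariate density with $f\in C^5$, $f(0)=1$, $f'(0)=0$, and $0$ is the unique global maximiser of $f$. Let $h:=\log f$ and $H:=h''(0)$, assumed $H<0$; there is $L>0$ with $|h^{(5)}(x)|<L$ for all $x\in\mathbb{R}$. Polynomial tails: there exist $\gamma,M,K>0$ with $\sup_{|x|>M} f(x)|x|^{\gamma}<K$. Dutchman's cap condition: there exists $\delta_2\in(0,M)$ such that $f(x)\le\exp(-x^2|H|/4)$ for $|x|<\delta_2$ and $f(x)\le\exp(-\delta_2^2|H|/4)$ for $\delta_2\le|x|\le M$. Normalisation: $N(\beta):=\int_{\mathbb{R}}f(x)^\beta\,dx$. A normal distribution $N(m,0)$ is understood as the point mass at $m$. *)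

theory Defs
  imports "HOL-Probability.Probability"
begin

definition normal_law :: "real \<Rightarrow> real \<Rightarrow> real measure" where
  "normal_law m v = (if v = 0 then return borel m else density lborel (normal_density m (sqrt v)))"

definition Nconst :: "(real \<Rightarrow> real) \<Rightarrow> real \<Rightarrow> real" where
  "Nconst f \<beta> = integral\<^sup>L lborel (\<lambda>x. f x powr \<beta>)"

definition W_law :: "(real \<Rightarrow> real) \<Rightarrow> real \<Rightarrow> real \<Rightarrow> real \<Rightarrow> nat \<Rightarrow> real measure" where
  "W_law f H h3 l d =
     (let \<beta> = l * real d;
          Px = density lborel (\<lambda>x. ennreal (f x powr \<beta> / Nconst f \<beta>));
          Py = normal_law 0 (1 / (\<beta> * \<bar>H\<bar>))
      in distr ((PiM {..<d} (\<lambda>_. Px)) \<Otimes>\<^sub>M (PiM {..<d} (\<lambda>_. Py))) borel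
           (\<lambda>(xs, ys). \<Sum>i<d. \<beta> * h3 / 6 * (ys i ^ 3 - xs i ^ 3)))"

end

theory Submission
  imports Defs "HOL-Real_Asymp.Real_Asymp"
begin

text \<open>
  The characteristic function of \<open>W(d)\<close> factorises as \<open>(\<phi>\<^sub>x(\<beta>) \<phi>\<^sub>y(\<beta>))\<^sup>d\<close>, where
  \<open>\<phi>\<^sub>x\<close>, \<open>\<phi>\<^sub>y\<close> are the characteristic functions of \<open>-c x\<^sup>3\<close> and \<open>c y\<^sup>3\<close>, \<open>c = \<beta> h'''(0)/6\<close>.
  A second order Taylor expansion of \<open>iexp\<close> reduces \<open>\<beta>(\<phi> - 1)\<close> to moments of order 3, 6 and 9.
  For the Gaussian \<open>y\<close> these are explicit; for \<open>x\<close> they follow from Laplace's method: after the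
  substitution \<open>x = u/\<surd>\<beta>\<close> the weight \<open>f(x)\<^sup>\<beta>\<close> converges to \<open>exp(H u\<^sup>2/2)\<close>, and for the odd
  third moment one needs the next term \<open>h'''(0) u\<^sup>3/(6\<surd>\<beta>)\<close> of the expansion of \<open>\<beta> h(u/\<surd>\<beta>)\<close>,
  which produces the non-zero mean.  Then \<open>d(\<phi>\<^sub>x\<phi>\<^sub>y - 1)\<close> converges, so \<open>(\<phi>\<^sub>x\<phi>\<^sub>y)\<^sup>d\<close> tends to
  the characteristic function of the normal limit, and Levy's continuity theorem concludes.
\<close>

lemma abs_exp_diff_le: "\<bar>exp a - exp b\<bar> \<le> \<bar>a - b\<bar> * exp (max a b)" for a b :: real
proof -
  have *: "exp y - exp x \<le> (y - x) * exp y" if "x \<le> y" for x y :: real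
  proof -
    have "exp y * exp (x - y) \<ge> exp y * (1 + (x - y))"
      by (intro mult_left_mono exp_ge_add_one_self) auto
    moreover have "exp y * exp (x - y) = exp x" by (simp add: exp_diff)
    ultimately show ?thesis by (simp add: algebra_simps)
  qed
  show ?thesis
    using *[of a b] *[of b a] by (cases "a \<le> b") (auto simp: max_def abs_if)
qed

lemma tendsto_mult_exp_minus_one:
  fixes g s :: "'a \<Rightarrow> real"
  assumes g: "(g \<longlongrightarrow> 0) F" and sg: "((\<lambda>x. s x * g x) \<longlongrightarrow> L) F"
  shows "((\<lambda>x. s x * (exp (g x) - 1)) \<longlongrightarrow> L) F"
proof -
  define q :: "real \<Rightarrow> real" where "q y = (if y = 0 then 1 else (exp y - 1) / y)" for y
  have "((\<lambda>y. (exp y - exp 0) / (y - 0)) \<longlongrightarrow> 1) (at (0::real))"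
    using DERIV_exp[of 0] by (simp add: has_field_derivative_iff)
  hence "(q \<longlongrightarrow> 1) (at 0)"
    unfolding q_def by (rule Lim_transform_eventually) (auto simp: eventually_at_filter)
  hence "isCont q 0" by (simp add: isCont_def q_def)
  hence "((\<lambda>x. q (g x)) \<longlongrightarrow> q 0) F"
    using g by (rule isCont_tendsto_compose)
  hence "((\<lambda>x. s x * g x * q (g x)) \<longlongrightarrow> L * 1) F"
    using sg by (intro tendsto_mult) (simp_all add: q_def)
  moreover have "s x * g x * q (g x) = s x * (exp (g x) - 1)" for x
    by (simp add: q_def)
  ultimately show ?thesis by simp
qed

lemma LIMSEQ_power_complex_exp:
  fixes z :: "nat \<Rightarrow> complex"
  assumes lim: "(\<lambda>n. of_nat n * (z n - 1)) \<longlonglongrightarrow> w"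
  shows "(\<lambda>n. z n ^ n) \<longlonglongrightarrow> exp w"
proof -
  define q :: "complex \<Rightarrow> complex" where "q = (\<lambda>y. if y = 1 then 1 else Ln y / (y - 1))"
  have "(Ln has_field_derivative inverse 1) (at 1)"
    by (rule has_field_derivative_Ln) (auto simp: complex_nonpos_Reals_iff)
  hence "((\<lambda>y. (Ln y - Ln 1) / (y - 1)) \<longlongrightarrow> 1) (at 1)"
    by (simp add: has_field_derivative_iff)
  hence "(q \<longlongrightarrow> 1) (at 1)"
    unfolding q_def by (rule Lim_transform_eventually) (auto simp: eventually_at_filter)
  hence cq: "isCont q 1" by (simp add: isCont_def q_def)
  have "(\<lambda>n. of_nat n * (z n - 1) / of_nat n) \<longlonglongrightarrow> 0"
    by (intro tendsto_divide_0[OF lim] tendsto_of_nat)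
  hence "(\<lambda>n. z n - 1) \<longlonglongrightarrow> 0"
    by (rule Lim_transform_eventually) (auto simp: eventually_sequentially intro!: exI[of _ 1])
  hence z1: "z \<longlonglongrightarrow> 1" using tendsto_add_const_iff[of "-1" z 1] by (simp add: LIM_zero_iff)
  hence "(\<lambda>n. of_nat n * (z n - 1) * q (z n)) \<longlonglongrightarrow> w * 1"
    using isCont_tendsto_compose[OF cq] by (intro tendsto_mult lim) (simp add: q_def)
  hence "(\<lambda>n. exp (of_nat n * (z n - 1) * q (z n))) \<longlonglongrightarrow> exp w"
    by (intro tendsto_exp) simp
  moreover have "\<forall>\<^sub>F n in sequentially. exp (of_nat n * (z n - 1) * q (z n)) = z n ^ n"
    using tendsto_imp_eventually_ne[OF z1 one_neq_zero]
  proof eventually_elim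
    case (elim n)
    have "exp (of_nat n * (z n - 1) * q (z n)) = exp (of_nat n * Ln (z n))"
      by (auto simp: q_def)
    also have "\<dots> = z n ^ n" using elim by (simp add: exp_of_nat_mult)
    finally show ?case .
  qed
  ultimately show ?thesis by (rule Lim_transform_eventually)
qed

lemma tendsto_scaled_minus_one_of_expansion:
  fixes Z :: "'a \<Rightarrow> complex" and a b e g :: "'a \<Rightarrow> real"
  assumes approx: "\<forall>\<^sub>F x in F. cmod (Z x - (1 + \<i> * complex_of_real (t * a x) - complex_of_real (t^2/2 * b x))) \<le> e x"
    and g_nonneg: "\<forall>\<^sub>F x in F. g x \<ge> 0"
    and ga: "((\<lambda>x. g x * a x) \<longlongrightarrow> a') F"
    and gb: "((\<lambda>x. g x * b x) \<longlongrightarrow> b') F"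
    and ge: "((\<lambda>x. g x * e x) \<longlongrightarrow> 0) F"
  shows "((\<lambda>x. complex_of_real (g x) * (Z x - 1)) \<longlongrightarrow> \<i> * complex_of_real (t * a') - complex_of_real (t^2/2 * b')) F"
proof -
  let ?R = "\<lambda>x. Z x - (1 + \<i> * complex_of_real (t * a x) - complex_of_real (t^2/2 * b x))"
  have "((\<lambda>x. complex_of_real (g x) * ?R x) \<longlongrightarrow> 0) F"
    by (rule Lim_null_comparison[OF _ ge])
       (use approx g_nonneg in \<open>eventually_elim, simp add: norm_mult mult_left_mono\<close>)
  moreover have "((\<lambda>x. \<i> * complex_of_real (t * (g x * a x)) - complex_of_real (t^2/2 * (g x * b x)))
      \<longlongrightarrow> \<i> * complex_of_real (t * a') - complex_of_real (t^2/2 * b')) F"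
    by (intro tendsto_intros ga gb)
  ultimately have "((\<lambda>x. complex_of_real (g x) * ?R x + (\<i> * complex_of_real (t * (g x * a x))
      - complex_of_real (t^2/2 * (g x * b x)))) \<longlongrightarrow> 0 + (\<i> * complex_of_real (t * a') - complex_of_real (t^2/2 * b'))) F"
    by (rule tendsto_add)
  thus ?thesis by (simp add: algebra_simps)
qed

lemma tendsto_scaled_product_minus_one:
  fixes a b :: "'a \<Rightarrow> complex" and g :: "'a \<Rightarrow> real"
  assumes ga: "((\<lambda>x. complex_of_real (g x) * (a x - 1)) \<longlongrightarrow> wa) F"
    and gb: "((\<lambda>x. complex_of_real (g x) * (b x - 1)) \<longlongrightarrow> wb) F"
    and g: "filterlim g at_top F"
  shows "((\<lambda>x. complex_of_real (g x) * (a x * b x - 1)) \<longlongrightarrow> wa + wb) F"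
proof -
  have "((\<lambda>x. complex_of_real (inverse (g x)) * (complex_of_real (g x) * (b x - 1))) \<longlongrightarrow> 0 * wb) F"
    using tendsto_of_real[OF tendsto_inverse_0_at_top[OF g], where 'a=complex]
    by (intro tendsto_mult gb) simp
  moreover have "\<forall>\<^sub>F x in F. complex_of_real (inverse (g x)) * (complex_of_real (g x) * (b x - 1)) = b x - 1"
    using filterlim_at_top_dense[THEN iffD1, OF g, rule_format, of 0] by eventually_elim simp
  ultimately have b1: "((\<lambda>x. b x - 1) \<longlongrightarrow> 0) F"
    by (simp add: Lim_transform_eventually)
  have "((\<lambda>x. complex_of_real (g x) * (a x - 1) + complex_of_real (g x) * (b x - 1)
      + complex_of_real (g x) * (a x - 1) * (b x - 1)) \<longlongrightarrow> wa + wb + wa * 0) F"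
    by (intro tendsto_add tendsto_mult ga gb b1)
  moreover have "complex_of_real (g x) * (a x - 1) + complex_of_real (g x) * (b x - 1)
      + complex_of_real (g x) * (a x - 1) * (b x - 1) = complex_of_real (g x) * (a x * b x - 1)" for x
    by algebra
  ultimately show ?thesis by simp
qed

lemma mult_divide_sqrt_square: "\<beta> > 0 \<Longrightarrow> \<beta> * (u / sqrt \<beta>)\<^sup>2 = u\<^sup>2"
  by (simp add: power_divide)

lemma mult_divide_sqrt_cube: "\<beta> > 0 \<Longrightarrow> \<beta> * (u / sqrt \<beta>)^3 = u^3 / sqrt \<beta>"
  by (simp add: power_divide power3_eq_cube)

lemma mult_abs_divide_sqrt_cube: "\<beta> > 0 \<Longrightarrow> \<beta> * \<bar>u / sqrt \<beta>\<bar>^3 = \<bar>u\<bar>^3 / sqrt \<beta>"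
  using mult_divide_sqrt_cube[of \<beta> "\<bar>u\<bar>"] by (simp add: abs_divide)

lemma abs_divide_sqrt_less_iff: "\<beta> > 0 \<Longrightarrow> \<bar>u / sqrt \<beta>\<bar> < \<delta> \<longleftrightarrow> \<bar>u\<bar> < \<delta> * sqrt \<beta>"
  by (simp add: abs_divide divide_less_eq)

lemma sqrt_power_odd: "x \<ge> 0 \<Longrightarrow> sqrt x ^ (2 * n + 1) = x ^ n * sqrt x"
  by (simp add: power_mult)

lemma integrable_abs_power_mult_exp_square:
  assumes c: "c > 0"
  shows "integrable lborel (\<lambda>u::real. \<bar>u\<bar>^k * exp (- c * u\<^sup>2))"
proof -
  define \<sigma> where "\<sigma> = sqrt (1/(2*c))"
  have \<sigma>: "\<sigma> > 0" "\<sigma>\<^sup>2 = 1/(2*c)" using c by (auto simp: \<sigma>_def)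
  have "integrable lborel (\<lambda>u. sqrt (2*pi*\<sigma>\<^sup>2) * (normal_density 0 \<sigma> u * \<bar>u - 0\<bar>^k))"
    using \<sigma> by (intro integrable_mult_right integrable_normal_moment_abs)
  also have "(\<lambda>u. sqrt (2*pi*\<sigma>\<^sup>2) * (normal_density 0 \<sigma> u * \<bar>u - 0\<bar>^k)) = (\<lambda>u. \<bar>u\<bar>^k * exp (- c * u\<^sup>2))"
    using c \<sigma> by (intro ext) (simp add: normal_density_def field_simps)
  finally show ?thesis .
qed

lemma cmod_iexp_minus_taylor2_le:
  "cmod (iexp x - (1 + \<i> * complex_of_real x - complex_of_real (x^2 / 2))) \<le> \<bar>x\<bar>^3 / 6"
  using iexp_approx1[of x 2]
  by (simp add: numeral_3_eq_3 numeral_2_eq_2 power2_eq_square algebra_simps)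

lemma cmod_scaled_iexp_minus_taylor2_le:
  assumes p: "p \<ge> 0"
  shows "cmod (p *\<^sub>R iexp (t * y) - (complex_of_real p + \<i> * complex_of_real (t * (p * y))
      - complex_of_real (t^2/2 * (p * y ^ 2)))) \<le> \<bar>t\<bar>^3 / 6 * (p * \<bar>y\<bar> ^ 3)"
proof -
  have "p *\<^sub>R iexp (t * y) - (complex_of_real p + \<i> * complex_of_real (t * (p * y))
      - complex_of_real (t^2/2 * (p * y ^ 2))) = complex_of_real p *
        (iexp (t * y) - (1 + \<i> * complex_of_real (t * y) - complex_of_real ((t * y)^2 / 2)))"
    by (simp add: scaleR_conv_of_real algebra_simps power2_eq_square)
  hence "cmod (p *\<^sub>R iexp (t * y) - (complex_of_real p + \<i> * complex_of_real (t * (p * y))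
      - complex_of_real (t^2/2 * (p * y ^ 2)))) =
      p * cmod (iexp (t * y) - (1 + \<i> * complex_of_real (t * y) - complex_of_real ((t * y)^2 / 2)))"
    using p by (simp add: norm_mult)
  also have "\<dots> \<le> p * (\<bar>t * y\<bar>^3 / 6)"
    using p by (intro mult_left_mono cmod_iexp_minus_taylor2_le)
  also have "\<dots> = \<bar>t\<bar>^3 / 6 * (p * \<bar>y\<bar> ^ 3)"
    by (simp add: abs_mult power_mult_distrib)
  finally show ?thesis .
qed

lemma cmod_integral_iexp_minus_taylor2_le:
  fixes p \<phi> :: "'a \<Rightarrow> real"
  assumes [measurable]: "p \<in> borel_measurable M" "\<phi> \<in> borel_measurable M"
    and p0: "\<And>x. p x \<ge> 0"
    and i0: "integrable M p" and i1: "integrable M (\<lambda>x. p x * \<phi> x)"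
    and i2: "integrable M (\<lambda>x. p x * \<phi> x ^ 2)" and i3: "integrable M (\<lambda>x. p x * \<bar>\<phi> x\<bar> ^ 3)"
    and p1: "(\<integral>x. p x \<partial>M) = 1"
  shows "cmod ((\<integral>x. p x *\<^sub>R iexp (t * \<phi> x) \<partial>M) -
           (1 + \<i> * complex_of_real (t * (\<integral>x. p x * \<phi> x \<partial>M))
              - complex_of_real (t^2 / 2 * (\<integral>x. p x * \<phi> x ^ 2 \<partial>M))))
         \<le> \<bar>t\<bar>^3 / 6 * (\<integral>x. p x * \<bar>\<phi> x\<bar> ^ 3 \<partial>M)"
proof -
  define T where "T x = complex_of_real (p x) + \<i> * complex_of_real (t * (p x * \<phi> x))
      - complex_of_real (t^2/2 * (p x * \<phi> x ^ 2))" for x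
  have j0: "integrable M (\<lambda>x. complex_of_real (p x))" using i0 by auto
  have j1: "integrable M (\<lambda>x. \<i> * complex_of_real (t * (p x * \<phi> x)))"
    using i1 by (intro integrable_mult_right integrable_of_real) auto
  have j2: "integrable M (\<lambda>x. complex_of_real (t^2/2 * (p x * \<phi> x ^ 2)))"
    using i2 by (intro integrable_of_real integrable_mult_right)
  have iT: "integrable M T"
    unfolding T_def by (intro Bochner_Integration.integrable_diff Bochner_Integration.integrable_add j0 j1 j2)
  have "(\<integral>x. T x \<partial>M) = (\<integral>x. complex_of_real (p x) \<partial>M) + (\<integral>x. \<i> * complex_of_real (t * (p x * \<phi> x)) \<partial>M)
      - (\<integral>x. complex_of_real (t^2/2 * (p x * \<phi> x ^ 2)) \<partial>M)"
    unfolding T_def using j0 j1 j2 by simp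
  also have "\<dots> = 1 + \<i> * complex_of_real (t * (\<integral>x. p x * \<phi> x \<partial>M))
      - complex_of_real (t^2 / 2 * (\<integral>x. p x * \<phi> x ^ 2 \<partial>M))"
    by (simp only: integral_mult_right_zero integral_complex_of_real p1) simp
  finally have intT: "(\<integral>x. T x \<partial>M) = \<dots>" .
  have iE: "integrable M (\<lambda>x. p x *\<^sub>R iexp (t * \<phi> x))"
    by (rule Bochner_Integration.integrable_bound[OF i0]) (auto simp: p0 norm_exp_i_times)
  have "cmod ((\<integral>x. p x *\<^sub>R iexp (t * \<phi> x) \<partial>M) - (\<integral>x. T x \<partial>M))
        = cmod (\<integral>x. p x *\<^sub>R iexp (t * \<phi> x) - T x \<partial>M)"
    using iE iT by simp
  also have "\<dots> \<le> (\<integral>x. cmod (p x *\<^sub>R iexp (t * \<phi> x) - T x) \<partial>M)"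
    by (rule integral_norm_bound)
  also have "\<dots> \<le> (\<integral>x. \<bar>t\<bar>^3 / 6 * (p x * \<bar>\<phi> x\<bar> ^ 3) \<partial>M)"
  proof (rule integral_mono)
    show "integrable M (\<lambda>x. cmod (p x *\<^sub>R iexp (t * \<phi> x) - T x))"
      by (intro integrable_norm Bochner_Integration.integrable_diff iE iT)
    show "integrable M (\<lambda>x. \<bar>t\<bar>^3 / 6 * (p x * \<bar>\<phi> x\<bar> ^ 3))"
      using i3 by (rule integrable_mult_right)
    show "cmod (p x *\<^sub>R iexp (t * \<phi> x) - T x) \<le> \<bar>t\<bar>^3 / 6 * (p x * \<bar>\<phi> x\<bar> ^ 3)" for x
      unfolding T_def by (rule cmod_scaled_iexp_minus_taylor2_le[OF p0])
  qed
  also have "\<dots> = \<bar>t\<bar>^3 / 6 * (\<integral>x. p x * \<bar>\<phi> x\<bar> ^ 3 \<partial>M)"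
    by (rule integral_mult_right_zero)
  finally show ?thesis unfolding intT .
qed

lemma levy_continuity_eventually:
  fixes M :: "nat \<Rightarrow> real measure"
  assumes "\<forall>\<^sub>F n in sequentially. real_distribution (M n)" and "real_distribution M'"
    and char_conv: "\<And>t. (\<lambda>n. char (M n) t) \<longlonglongrightarrow> char M' t"
  shows "weak_conv_m M M'"
proof -
  obtain D where "\<And>n. n \<ge> D \<Longrightarrow> real_distribution (M n)"
    using assms(1) by (auto simp: eventually_sequentially)
  hence "weak_conv_m (\<lambda>n. M (n + D)) M'"
    using assms(2) LIMSEQ_ignore_initial_segment[OF char_conv] by (intro levy_continuity) auto
  thus ?thesis
    unfolding weak_conv_m_def weak_conv_def by (auto intro: LIMSEQ_offset)
qed

section \<open>Normal laws and the law of \<open>W(d)\<close>\<close>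

lemma real_distribution_normal_law:
  assumes "v \<ge> 0" shows "real_distribution (normal_law m v)"
proof (cases "v = 0")
  case True
  thus ?thesis unfolding real_distribution_def real_distribution_axioms_def
    by (simp add: normal_law_def prob_space_return)
next
  case False
  hence "prob_space (density lborel (normal_density m (sqrt v)))"
    using assms by (intro prob_space_normal_density) simp
  thus ?thesis unfolding real_distribution_def real_distribution_axioms_def
    using False by (simp add: normal_law_def)
qed

lemma char_normal_law:
  assumes v: "v \<ge> 0"
  shows "char (normal_law m v) t = exp (\<i> * complex_of_real (t * m) - complex_of_real (v * t^2 / 2))"
proof (cases "v = 0")
  case True
  thus ?thesis by (simp add: normal_law_def char_def integral_return)
next
  case False
  define \<sigma> where "\<sigma> = sqrt v"
  have \<sigma>: "\<sigma> > 0" using v False by (simp add: \<sigma>_def)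
  have "char (normal_law m v) t = (\<integral>x. normal_density m \<sigma> x *\<^sub>R iexp (t * x) \<partial>lborel)"
    using False by (simp add: normal_law_def char_def integral_density \<sigma>_def)
  also have "\<dots> = \<bar>\<sigma>\<bar> *\<^sub>R (\<integral>u. normal_density m \<sigma> (m + \<sigma> * u) *\<^sub>R iexp (t * (m + \<sigma> * u)) \<partial>lborel)"
    using \<sigma> by (intro lborel_integral_real_affine) simp
  also have "(\<lambda>u. normal_density m \<sigma> (m + \<sigma> * u) *\<^sub>R iexp (t * (m + \<sigma> * u)))
      = (\<lambda>u. (1/\<sigma>) *\<^sub>R (iexp (t * m) * (std_normal_density u *\<^sub>R iexp ((t * \<sigma>) * u))))"
  proof
    fix u
    have "normal_density m \<sigma> (m + \<sigma> * u) = std_normal_density u / \<sigma>"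
      using \<sigma> by (simp add: normal_density_def power_mult_distrib real_sqrt_mult field_simps)
    moreover have "iexp (t * (m + \<sigma> * u)) = iexp (t * m) * iexp ((t * \<sigma>) * u)"
      by (simp add: algebra_simps exp_add[symmetric])
    ultimately show "normal_density m \<sigma> (m + \<sigma> * u) *\<^sub>R iexp (t * (m + \<sigma> * u)) =
        (1/\<sigma>) *\<^sub>R (iexp (t * m) * (std_normal_density u *\<^sub>R iexp ((t * \<sigma>) * u)))"
      by (simp add: scaleR_conv_of_real algebra_simps)
  qed
  also have "\<bar>\<sigma>\<bar> *\<^sub>R (\<integral>u. (1/\<sigma>) *\<^sub>R (iexp (t * m) * (std_normal_density u *\<^sub>R iexp ((t * \<sigma>) * u))) \<partial>lborel)
      = \<bar>\<sigma>\<bar> *\<^sub>R ((1/\<sigma>) *\<^sub>R (iexp (t * m) * (\<integral>u. std_normal_density u *\<^sub>R iexp ((t * \<sigma>) * u) \<partial>lborel)))"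
    by (simp only: integral_scaleR_right integral_mult_right_zero)
  also have "\<dots> = iexp (t * m) * char std_normal_distribution (t * \<sigma>)"
    using \<sigma> by (simp add: char_def integral_density)
  also have "\<dots> = iexp (t * m) * complex_of_real (exp (- (v * t^2) / 2))"
    using v by (simp add: char_std_normal_distribution \<sigma>_def power_mult_distrib mult.commute)
  also have "\<dots> = exp (\<i> * complex_of_real (t * m) + complex_of_real (- (v * t^2) / 2))"
    by (simp only: exp_add exp_of_real)
  finally show ?thesis by simp
qed

lemma integral_pair_measure_mult:
  fixes F G :: "_ \<Rightarrow> complex"
  assumes "prob_space M1" and "prob_space M2"
    and [measurable]: "F \<in> borel_measurable M1" "G \<in> borel_measurable M2"
    and Fb: "\<And>x. norm (F x) \<le> 1" and Gb: "\<And>y. norm (G y) \<le> 1"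
  shows "(\<integral>\<omega>. F (fst \<omega>) * G (snd \<omega>) \<partial>(M1 \<Otimes>\<^sub>M M2)) = (\<integral>x. F x \<partial>M1) * (\<integral>y. G y \<partial>M2)"
proof -
  interpret M1: prob_space M1 by fact
  interpret M2: prob_space M2 by fact
  interpret pair_prob_space M1 M2 ..
  have int: "integrable (M1 \<Otimes>\<^sub>M M2) (\<lambda>\<omega>. F (fst \<omega>) * G (snd \<omega>))"
    using Fb Gb by (intro integrable_const_bound[where B=1]) (auto simp: norm_mult mult_le_one)
  have "(\<integral>\<omega>. F (fst \<omega>) * G (snd \<omega>) \<partial>(M1 \<Otimes>\<^sub>M M2)) = (\<integral>x. (\<integral>y. F x * G y \<partial>M2) \<partial>M1)"
    using integral_fst'[OF int] by simp
  also have "\<dots> = (\<integral>x. F x * (\<integral>y. G y \<partial>M2) \<partial>M1)"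
    by (simp add: integral_mult_right_zero)
  also have "\<dots> = (\<integral>x. F x \<partial>M1) * (\<integral>y. G y \<partial>M2)"
    by (simp add: integral_mult_left_zero)
  finally show ?thesis .
qed

lemma integral_PiM_prod_eq_power:
  fixes g :: "'a \<Rightarrow> complex"
  assumes "prob_space P" and [measurable]: "g \<in> borel_measurable P" and "\<And>x. norm (g x) \<le> 1"
  shows "(\<integral>xs. (\<Prod>i<d. g (xs i)) \<partial>PiM {..<d} (\<lambda>_. P)) = (\<integral>x. g x \<partial>P) ^ d"
proof -
  interpret P: prob_space P by fact
  have "product_sigma_finite (\<lambda>_. P)"
    unfolding product_sigma_finite_def using P.sigma_finite_measure_axioms by simp
  hence "(\<integral>xs. (\<Prod>i<d. g (xs i)) \<partial>PiM {..<d} (\<lambda>_. P)) = (\<Prod>i<d. \<integral>x. g x \<partial>P)"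
    using assms(3) by (intro product_sigma_finite.product_integral_prod P.integrable_const_bound[where B=1]) auto
  thus ?thesis by simp
qed

lemma iexp_sum: "finite A \<Longrightarrow> iexp (\<Sum>i\<in>A. x i) = (\<Prod>i\<in>A. iexp (x i))"
  by (simp add: sum_distrib_left exp_sum)

lemma prob_space_density_Nconst:
  assumes [measurable]: "f \<in> borel_measurable borel"
    and fi: "integrable lborel (\<lambda>x. f x powr \<beta>)" and N: "Nconst f \<beta> > 0"
  shows "prob_space (density lborel (\<lambda>x. ennreal (f x powr \<beta> / Nconst f \<beta>)))"
proof
  have "(\<integral>\<^sup>+x. ennreal (f x powr \<beta> / Nconst f \<beta>) \<partial>lborel) = ennreal (\<integral>x. f x powr \<beta> / Nconst f \<beta> \<partial>lborel)"
    using fi N by (intro nn_integral_eq_integral) auto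
  also have "(\<integral>x. f x powr \<beta> / Nconst f \<beta> \<partial>lborel) = 1"
    using N by (simp add: Nconst_def)
  finally show "emeasure (density lborel (\<lambda>x. ennreal (f x powr \<beta> / Nconst f \<beta>)))
      (space (density lborel (\<lambda>x. ennreal (f x powr \<beta> / Nconst f \<beta>)))) = 1"
    by (simp add: emeasure_density)
qed

lemma
  fixes f :: "real \<Rightarrow> real" and H h3 l t :: real and d :: nat
  defines "\<beta> \<equiv> l * real d"
  assumes \<beta>: "\<beta> > 0" and H: "H \<noteq> 0" and [measurable]: "f \<in> borel_measurable borel"
    and fi: "integrable lborel (\<lambda>x. f x powr \<beta>)" and N: "Nconst f \<beta> > 0"
  shows real_distribution_W_law: "real_distribution (W_law f H h3 l d)"
    and char_W_law: "char (W_law f H h3 l d) t =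
      ((\<integral>x. (f x powr \<beta> / Nconst f \<beta>) *\<^sub>R iexp (t * (- (\<beta> * h3 / 6) * x^3)) \<partial>lborel) *
       (\<integral>y. normal_density 0 (sqrt (1 / (\<beta> * \<bar>H\<bar>))) y *\<^sub>R iexp (t * (\<beta> * h3 / 6 * y^3)) \<partial>lborel)) ^ d"
proof -
  define c where "c = \<beta> * h3 / 6"
  define Px where "Px = density lborel (\<lambda>x. ennreal (f x powr \<beta> / Nconst f \<beta>))"
  define Py where "Py = density lborel (normal_density 0 (sqrt (1 / (\<beta> * \<bar>H\<bar>))))"
  define Q1 where "Q1 = PiM {..<d} (\<lambda>_. Px)"
  define Q2 where "Q2 = PiM {..<d} (\<lambda>_. Py)"
  define S where "S = (\<lambda>(xs, ys). \<Sum>i<d. \<beta> * h3 / 6 * (ys i ^ 3 - xs i ^ 3 :: real))"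
  have pPx: "prob_space Px" unfolding Px_def by (rule prob_space_density_Nconst[OF _ fi N]) simp
  have pPy: "prob_space Py" unfolding Py_def using \<beta> H by (intro prob_space_normal_density) simp
  have [measurable_cong]: "sets Px = sets borel" "sets Py = sets borel" by (simp_all add: Px_def Py_def)
  have pQ1: "prob_space Q1" unfolding Q1_def by (rule prob_space_PiM) (rule pPx)
  have pQ2: "prob_space Q2" unfolding Q2_def by (rule prob_space_PiM) (rule pPy)
  interpret Q1: prob_space Q1 by (rule pQ1)
  interpret Q2: prob_space Q2 by (rule pQ2)
  interpret pair_prob_space Q1 Q2 ..
  have [measurable]: "S \<in> borel_measurable (Q1 \<Otimes>\<^sub>M Q2)"
    unfolding S_def Q1_def Q2_def by measurable
  have "normal_law 0 (1 / (\<beta> * \<bar>H\<bar>)) = Py"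
    using \<beta> H by (simp add: normal_law_def Py_def)
  hence W: "W_law f H h3 l d = distr (Q1 \<Otimes>\<^sub>M Q2) borel S"
    unfolding W_law_def Let_def \<beta>_def[symmetric] by (simp add: Px_def Q1_def Q2_def S_def)
  show "real_distribution (W_law f H h3 l d)"
    unfolding W by (intro prob_space.real_distribution_distr prob_space_axioms) simp
  define F where "F xs = (\<Prod>i<d. iexp (t * (- c * xs i ^ 3)))" for xs :: "nat \<Rightarrow> real"
  define G where "G ys = (\<Prod>i<d. iexp (t * (c * ys i ^ 3)))" for ys :: "nat \<Rightarrow> real"
  have FG: "iexp (t * S \<omega>) = F (fst \<omega>) * G (snd \<omega>)" for \<omega>
  proof -
    obtain xs ys where \<omega>: "\<omega> = (xs, ys)" by (cases \<omega>)
    have "t * S \<omega> = (\<Sum>i<d. t * (- c * xs i ^ 3) + t * (c * ys i ^ 3))"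
      unfolding \<omega> S_def c_def by (simp add: sum_distrib_left algebra_simps)
    hence "iexp (t * S \<omega>) = (\<Prod>i<d. iexp (t * (- c * xs i ^ 3)) * iexp (t * (c * ys i ^ 3)))"
      by (simp only: iexp_sum[OF finite_lessThan] of_real_add distrib_left exp_add)
    thus ?thesis
      unfolding \<omega> F_def G_def by (simp add: prod.distrib)
  qed
  have FG_measurable: "F \<in> borel_measurable Q1" "G \<in> borel_measurable Q2"
    unfolding F_def G_def Q1_def Q2_def by measurable
  have "char (W_law f H h3 l d) t = (\<integral>\<omega>. iexp (t * S \<omega>) \<partial>(Q1 \<Otimes>\<^sub>M Q2))"
    unfolding W char_def by (simp add: integral_distr)
  also have "\<dots> = (\<integral>\<omega>. F (fst \<omega>) * G (snd \<omega>) \<partial>(Q1 \<Otimes>\<^sub>M Q2))"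
    by (simp only: FG)
  also have "\<dots> = (\<integral>xs. F xs \<partial>Q1) * (\<integral>ys. G ys \<partial>Q2)"
    by (rule integral_pair_measure_mult[OF pQ1 pQ2 FG_measurable])
       (simp_all add: F_def G_def prod_norm[symmetric] norm_exp_i_times)
  also have "(\<integral>xs. F xs \<partial>Q1) = (\<integral>x. iexp (t * (- c * x ^ 3)) \<partial>Px) ^ d"
    unfolding F_def Q1_def by (rule integral_PiM_prod_eq_power[OF pPx]) (simp_all add: norm_exp_i_times)
  also have "(\<integral>ys. G ys \<partial>Q2) = (\<integral>y. iexp (t * (c * y ^ 3)) \<partial>Py) ^ d"
    unfolding G_def Q2_def by (rule integral_PiM_prod_eq_power[OF pPy]) (simp_all add: norm_exp_i_times)
  also have "(\<integral>x. iexp (t * (- c * x ^ 3)) \<partial>Px) =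
      (\<integral>x. (f x powr \<beta> / Nconst f \<beta>) *\<^sub>R iexp (t * (- (\<beta> * h3 / 6) * x^3)) \<partial>lborel)"
    unfolding Px_def c_def using N by (subst integral_density) auto
  also have "(\<integral>y. iexp (t * (c * y ^ 3)) \<partial>Py) =
      (\<integral>y. normal_density 0 (sqrt (1 / (\<beta> * \<bar>H\<bar>))) y *\<^sub>R iexp (t * (\<beta> * h3 / 6 * y^3)) \<partial>lborel)"
    unfolding Py_def c_def by (subst integral_density) auto
  finally show "char (W_law f H h3 l d) t =
      ((\<integral>x. (f x powr \<beta> / Nconst f \<beta>) *\<^sub>R iexp (t * (- (\<beta> * h3 / 6) * x^3)) \<partial>lborel) *
       (\<integral>y. normal_density 0 (sqrt (1 / (\<beta> * \<bar>H\<bar>))) y *\<^sub>R iexp (t * (\<beta> * h3 / 6 * y^3)) \<partial>lborel)) ^ d"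
    by (simp only: power_mult_distrib)
qed

section \<open>Laplace's method\<close>

text \<open>The parameter \<open>a3\<close> stands for \<open>h'''(0)\<close>.\<close>

locale laplace_asymptotics =
  fixes f :: "real \<Rightarrow> real" and H a3 \<delta> C s \<beta>0 :: real
  assumes fpos: "\<And>x. 0 < f x"
    and fcont: "continuous_on UNIV f"
    and fle1: "\<And>x. f x \<le> 1"
    and Hneg: "H < 0"
    and \<delta>pos: "0 < \<delta>"
    and Cnn: "0 \<le> C"
    and log_cubic_bound: "\<And>x. \<bar>x\<bar> < \<delta> \<Longrightarrow> \<bar>ln (f x) - H * x\<^sup>2 / 2\<bar> \<le> C * \<bar>x\<bar>^3"
    and log_cubic_limit: "((\<lambda>x. (ln (f x) - H * x\<^sup>2 / 2) / x^3) \<longlongrightarrow> a3 / 6) (at 0)"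
    and cap: "\<And>x. \<bar>x\<bar> < \<delta> \<Longrightarrow> f x \<le> exp (- x\<^sup>2 * \<bar>H\<bar> / 4)"
    and s_pos: "0 < s" and s_less_1: "s < 1" and far_bound: "\<And>x. \<delta> \<le> \<bar>x\<bar> \<Longrightarrow> f x \<le> s"
    and \<beta>0_pos: "0 < \<beta>0"
    and moments_integrable: "\<And>k. k \<le> 10 \<Longrightarrow> integrable lborel (\<lambda>x. \<bar>x\<bar>^k * f x powr \<beta>0)"
begin

lemma f_measurable[measurable]: "f \<in> borel_measurable borel"
  using fcont by (rule borel_measurable_continuous_onI)

definition G :: "real \<Rightarrow> real" where "G u = exp (H * u\<^sup>2 / 2)"

lemma G_measurable[measurable]: "G \<in> borel_measurable borel"
  unfolding G_def by measurable

lemma G_pos: "G u > 0"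
  by (simp add: G_def)

lemma G_le: "G u \<le> exp (- \<bar>H\<bar> * u\<^sup>2 / 4)"
  using Hneg by (simp add: G_def)

lemma G_eq_normal_density: "G u = sqrt (2 * pi / \<bar>H\<bar>) * normal_density 0 (sqrt (1 / \<bar>H\<bar>)) u"
  using Hneg by (simp add: G_def normal_density_def real_sqrt_divide field_simps)

lemma integrable_gaussian_bound: "integrable lborel (\<lambda>u. \<bar>u\<bar>^k * exp (- \<bar>H\<bar> * u\<^sup>2 / 4))"
  using integrable_abs_power_mult_exp_square[of "\<bar>H\<bar>/4" k] Hneg by simp

lemma integrable_power_G: "integrable lborel (\<lambda>u. u^k * G u)"
  by (rule Bochner_Integration.integrable_bound[OF integrable_gaussian_bound[of k]])
     (use G_le in \<open>auto simp: abs_mult power_abs abs_of_pos[OF G_pos] intro!: AE_I2 mult_left_mono\<close>)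

lemma integral_G: "(\<integral>u. G u \<partial>lborel) = sqrt (2 * pi / \<bar>H\<bar>)"
  using Hneg by (simp add: G_eq_normal_density)

lemma integral_power6_G: "(\<integral>u. u^6 * G u \<partial>lborel) = sqrt (2 * pi / \<bar>H\<bar>) * (15 / \<bar>H\<bar>^3)"
proof -
  have "(\<integral>u. u^6 * G u \<partial>lborel) =
      sqrt (2 * pi / \<bar>H\<bar>) * (\<integral>u. normal_density 0 (sqrt (1 / \<bar>H\<bar>)) u * (u - 0)^(2*3) \<partial>lborel)"
    by (subst integral_mult_right_zero[symmetric]) (simp add: G_eq_normal_density mult_ac)
  also have "(\<integral>u. normal_density 0 (sqrt (1 / \<bar>H\<bar>)) u * (u - 0)^(2*3) \<partial>lborel) =
      fact (2*3) / ((2 / (sqrt (1 / \<bar>H\<bar>))\<^sup>2)^3 * fact 3)"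
    using Hneg by (intro integral_normal_moment_even) simp
  also have "\<dots> = 15 / \<bar>H\<bar>^3"
    using Hneg by (simp add: fact_numeral power3_eq_cube field_simps)
  finally show ?thesis .
qed

lemma integral_power3_G: "(\<integral>u. u^3 * G u \<partial>lborel) = 0"
proof -
  have "(\<integral>u. u^3 * G u \<partial>lborel) =
      sqrt (2 * pi / \<bar>H\<bar>) * (\<integral>u. normal_density 0 (sqrt (1 / \<bar>H\<bar>)) u * (u - 0)^(2*1+1) \<partial>lborel)"
    by (subst integral_mult_right_zero[symmetric]) (simp add: G_eq_normal_density mult_ac)
  also have "(\<integral>u. normal_density 0 (sqrt (1 / \<bar>H\<bar>)) u * (u - 0)^(2*1+1) \<partial>lborel) = 0"
    using Hneg by (intro integral_normal_moment_odd) simp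
  finally show ?thesis by simp
qed

definition F :: "real \<Rightarrow> real \<Rightarrow> real" where
  "F \<beta> u = (if \<bar>u\<bar> < \<delta> * sqrt \<beta> then exp (\<beta> * ln (f (u / sqrt \<beta>))) else 0)"

lemma F_measurable[measurable]: "F \<beta> \<in> borel_measurable borel"
  unfolding F_def by measurable

lemma F_nonneg: "F \<beta> u \<ge> 0"
  by (simp add: F_def)

lemma ln_f_0: "ln (f 0) = 0"
  using log_cubic_bound[of 0] \<delta>pos by simp

lemma powr_eq_exp_ln_f: "f x powr \<beta> = exp (\<beta> * ln (f x))"
  using fpos[of x] by (simp add: powr_def)

lemma scaled_log_le:
  assumes b: "\<beta> > 0" and u: "\<bar>u\<bar> < \<delta> * sqrt \<beta>"
  shows "\<beta> * ln (f (u / sqrt \<beta>)) \<le> - \<bar>H\<bar> * u\<^sup>2 / 4"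
proof -
  have x: "\<bar>u / sqrt \<beta>\<bar> < \<delta>" using abs_divide_sqrt_less_iff[OF b] u by simp
  have "ln (f (u / sqrt \<beta>)) \<le> - (u / sqrt \<beta>)\<^sup>2 * \<bar>H\<bar> / 4"
    using cap[OF x] fpos by (metis ln_exp ln_le_cancel_iff exp_gt_zero)
  hence "\<beta> * ln (f (u / sqrt \<beta>)) \<le> \<beta> * (- (u / sqrt \<beta>)\<^sup>2 * \<bar>H\<bar> / 4)"
    using b by (intro mult_left_mono) auto
  also have "\<dots> = - \<bar>H\<bar> * (\<beta> * (u / sqrt \<beta>)\<^sup>2) / 4"
    by (simp add: algebra_simps)
  finally show ?thesis using mult_divide_sqrt_square[OF b] by simp
qed

lemma abs_scaled_log_error_le:
  assumes b: "\<beta> > 0" and u: "\<bar>u\<bar> < \<delta> * sqrt \<beta>"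
  shows "\<bar>\<beta> * ln (f (u / sqrt \<beta>)) - H * u\<^sup>2 / 2\<bar> \<le> C * \<bar>u\<bar>^3 / sqrt \<beta>"
proof -
  let ?x = "u / sqrt \<beta>"
  have x: "\<bar>?x\<bar> < \<delta>" using abs_divide_sqrt_less_iff[OF b] u by simp
  have "\<beta> * ln (f ?x) - H * u\<^sup>2 / 2 = \<beta> * (ln (f ?x) - H * ?x\<^sup>2 / 2)"
    using mult_divide_sqrt_square[OF b, of u] by (simp add: algebra_simps)
  hence "\<bar>\<beta> * ln (f ?x) - H * u\<^sup>2 / 2\<bar> = \<beta> * \<bar>ln (f ?x) - H * ?x\<^sup>2 / 2\<bar>"
    using b by (simp add: abs_mult)
  also have "\<dots> \<le> \<beta> * (C * \<bar>?x\<bar>^3)"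
    using b log_cubic_bound[OF x] by (intro mult_left_mono) auto
  also have "\<dots> = C * (\<beta> * \<bar>?x\<bar>^3)" by simp
  also have "\<dots> = C * \<bar>u\<bar>^3 / sqrt \<beta>"
    by (simp only: mult_abs_divide_sqrt_cube[OF b]) simp
  finally show ?thesis .
qed

lemma F_le: "\<beta> > 0 \<Longrightarrow> F \<beta> u \<le> exp (- \<bar>H\<bar> * u\<^sup>2 / 4)"
  using scaled_log_le by (simp add: F_def)

lemma integrable_power_F: "\<beta> > 0 \<Longrightarrow> integrable lborel (\<lambda>u. u^k * F \<beta> u)"
  by (rule Bochner_Integration.integrable_bound[OF integrable_gaussian_bound[of k]])
     (use F_le F_nonneg in \<open>auto simp: abs_mult power_abs intro!: AE_I2 mult_left_mono\<close>)

lemma eventually_near_region: "\<forall>\<^sub>F \<beta> in at_top. \<beta> > 0 \<and> \<bar>u\<bar> < \<delta> * sqrt \<beta>"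
proof (rule eventually_conj)
  show "\<forall>\<^sub>F \<beta> in at_top. \<bar>u\<bar> < \<delta> * sqrt \<beta>" using \<delta>pos by real_asymp
qed (rule eventually_gt_at_top)

lemma F_tendsto_G: "((\<lambda>\<beta>. F \<beta> u) \<longlongrightarrow> G u) at_top"
proof -
  have "((\<lambda>\<beta>. C * \<bar>u\<bar>^3 / sqrt \<beta>) \<longlongrightarrow> 0) at_top" by real_asymp
  hence "((\<lambda>\<beta>. \<beta> * ln (f (u / sqrt \<beta>)) - H * u\<^sup>2 / 2) \<longlongrightarrow> 0) at_top"
    by (rule Lim_null_comparison[rotated])
       (use eventually_near_region[of u] in \<open>eventually_elim, use abs_scaled_log_error_le in auto\<close>)
  hence "((\<lambda>\<beta>. exp (\<beta> * ln (f (u / sqrt \<beta>)))) \<longlongrightarrow> G u) at_top"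
    unfolding G_def by (intro tendsto_exp) (simp add: LIM_zero_iff)
  thus ?thesis
    by (rule Lim_transform_eventually) (use eventually_near_region[of u] in \<open>eventually_elim, simp add: F_def\<close>)
qed

lemma sqrt_F_minus_G_tendsto: "((\<lambda>\<beta>. sqrt \<beta> * (F \<beta> u - G u)) \<longlongrightarrow> a3/6 * u^3 * G u) at_top"
proof (cases "u = 0")
  case True
  have "\<forall>\<^sub>F \<beta> in at_top. sqrt \<beta> * (F \<beta> u - G u) = a3/6 * u^3 * G u"
    using eventually_gt_at_top[of 0] by eventually_elim (use \<delta>pos in \<open>simp add: True F_def G_def ln_f_0\<close>)
  thus ?thesis by (rule tendsto_eventually)
next
  case False
  define D where "D \<beta> = \<beta> * ln (f (u / sqrt \<beta>)) - H * u\<^sup>2 / 2" for \<beta>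
  have "filterlim (\<lambda>\<beta>. u / sqrt \<beta>) (at 0) at_top"
  proof (rule filterlim_atI)
    show "((\<lambda>\<beta>. u / sqrt \<beta>) \<longlongrightarrow> 0) at_top" by real_asymp
    show "\<forall>\<^sub>F \<beta> in at_top. u / sqrt \<beta> \<noteq> 0"
      using eventually_gt_at_top[of 0] by eventually_elim (use False in simp)
  qed
  hence "((\<lambda>\<beta>. (ln (f (u / sqrt \<beta>)) - H * (u / sqrt \<beta>)\<^sup>2 / 2) / (u / sqrt \<beta>)^3) \<longlongrightarrow> a3 / 6) at_top"
    by (rule filterlim_compose[OF log_cubic_limit])
  hence "((\<lambda>\<beta>. u^3 * ((ln (f (u / sqrt \<beta>)) - H * (u / sqrt \<beta>)\<^sup>2 / 2) / (u / sqrt \<beta>)^3)) \<longlongrightarrow> u^3 * (a3 / 6)) at_top"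
    by (intro tendsto_mult tendsto_const)
  moreover have "\<forall>\<^sub>F \<beta> in at_top.
      u^3 * ((ln (f (u / sqrt \<beta>)) - H * (u / sqrt \<beta>)\<^sup>2 / 2) / (u / sqrt \<beta>)^3) = sqrt \<beta> * D \<beta>"
    using eventually_gt_at_top[of 0]
  proof eventually_elim
    case (elim \<beta>)
    have "sqrt \<beta> * D \<beta> = sqrt \<beta> * (\<beta> * (ln (f (u / sqrt \<beta>)) - H * (u / sqrt \<beta>)\<^sup>2 / 2))"
      using mult_divide_sqrt_square[OF elim, of u] by (simp add: D_def algebra_simps)
    also have "\<dots> = u^3 * ((ln (f (u / sqrt \<beta>)) - H * (u / sqrt \<beta>)\<^sup>2 / 2) / (u / sqrt \<beta>)^3)"
      using elim False by (simp add: field_simps power3_eq_cube)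
    finally show ?case by simp
  qed
  ultimately have sD: "((\<lambda>\<beta>. sqrt \<beta> * D \<beta>) \<longlongrightarrow> u^3 * (a3 / 6)) at_top"
    by (rule Lim_transform_eventually)
  have "((\<lambda>\<beta>. inverse (sqrt \<beta>) * (sqrt \<beta> * D \<beta>)) \<longlongrightarrow> 0 * (u^3 * (a3 / 6))) at_top"
    by (intro tendsto_mult sD) real_asymp
  hence "((\<lambda>\<beta>. inverse (sqrt \<beta>) * (sqrt \<beta> * D \<beta>)) \<longlongrightarrow> 0) at_top"
    by simp
  hence "(D \<longlongrightarrow> 0) at_top"
    by (rule Lim_transform_eventually) (use eventually_gt_at_top[of 0] in \<open>eventually_elim, simp\<close>)
  hence "((\<lambda>\<beta>. G u * (sqrt \<beta> * (exp (D \<beta>) - 1))) \<longlongrightarrow> a3/6 * u^3 * G u) at_top"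
    using tendsto_mult[OF tendsto_const[of "G u"] tendsto_mult_exp_minus_one[OF _ sD]] by (simp add: mult_ac)
  moreover have "\<forall>\<^sub>F \<beta> in at_top. G u * (sqrt \<beta> * (exp (D \<beta>) - 1)) = sqrt \<beta> * (F \<beta> u - G u)"
    using eventually_near_region[of u]
    by eventually_elim (simp add: F_def G_def D_def exp_diff algebra_simps)
  ultimately show ?thesis
    by (rule Lim_transform_eventually)
qed

lemma abs_sqrt_F_minus_G_le:
  assumes b: "\<beta> > 0"
  shows "\<bar>u^3 * (sqrt \<beta> * (F \<beta> u - G u))\<bar> \<le> (C * \<bar>u\<bar>^6 + \<bar>u\<bar>^4 / \<delta>) * exp (- \<bar>H\<bar> * u\<^sup>2 / 4)"
proof (cases "\<bar>u\<bar> < \<delta> * sqrt \<beta>")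
  case True
  let ?A = "\<beta> * ln (f (u / sqrt \<beta>))"
  have "\<bar>F \<beta> u - G u\<bar> = \<bar>exp ?A - exp (H * u\<^sup>2 / 2)\<bar>"
    using True by (simp add: F_def G_def)
  also have "\<dots> \<le> \<bar>?A - H * u\<^sup>2 / 2\<bar> * exp (max ?A (H * u\<^sup>2 / 2))"
    by (rule abs_exp_diff_le)
  also have "\<dots> \<le> (C * \<bar>u\<bar>^3 / sqrt \<beta>) * exp (- \<bar>H\<bar> * u\<^sup>2 / 4)"
    using abs_scaled_log_error_le[OF b True] scaled_log_le[OF b True] G_le[of u]
    by (intro mult_mono) (auto simp: G_def)
  finally have FG: "\<bar>F \<beta> u - G u\<bar> \<le> (C * \<bar>u\<bar>^3 / sqrt \<beta>) * exp (- \<bar>H\<bar> * u\<^sup>2 / 4)" .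
  have "\<bar>u^3 * (sqrt \<beta> * (F \<beta> u - G u))\<bar> = \<bar>u\<bar>^3 * (sqrt \<beta> * \<bar>F \<beta> u - G u\<bar>)"
    using b by (simp add: abs_mult power_abs)
  also have "\<dots> \<le> \<bar>u\<bar>^3 * (sqrt \<beta> * ((C * \<bar>u\<bar>^3 / sqrt \<beta>) * exp (- \<bar>H\<bar> * u\<^sup>2 / 4)))"
    using FG b by (intro mult_left_mono) auto
  also have "\<dots> = C * \<bar>u\<bar>^6 * exp (- \<bar>H\<bar> * u\<^sup>2 / 4)"
    using b by (simp add: field_simps power_add[symmetric])
  also have "\<dots> \<le> (C * \<bar>u\<bar>^6 + \<bar>u\<bar>^4 / \<delta>) * exp (- \<bar>H\<bar> * u\<^sup>2 / 4)"
    using \<delta>pos by (intro mult_right_mono) auto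
  finally show ?thesis .
next
  case False
  hence sb: "sqrt \<beta> \<le> \<bar>u\<bar> / \<delta>" using \<delta>pos by (simp add: field_simps)
  have "\<bar>u^3 * (sqrt \<beta> * (F \<beta> u - G u))\<bar> = \<bar>u\<bar>^3 * sqrt \<beta> * G u"
    using False b by (simp add: F_def abs_mult power_abs G_def)
  also have "\<dots> \<le> \<bar>u\<bar>^3 * (\<bar>u\<bar> / \<delta>) * exp (- \<bar>H\<bar> * u\<^sup>2 / 4)"
    using sb G_le[of u] b \<delta>pos by (intro mult_mono) (auto simp: G_def)
  also have "\<dots> \<le> (C * \<bar>u\<bar>^6 + \<bar>u\<bar>^4 / \<delta>) * exp (- \<bar>H\<bar> * u\<^sup>2 / 4)"
    using Cnn by (intro mult_right_mono) (auto simp: power4_eq_xxxx power3_eq_cube)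
  finally show ?thesis .
qed

definition laplace_int :: "(real \<Rightarrow> real) \<Rightarrow> real \<Rightarrow> real" where
  "laplace_int \<phi> \<beta> = (\<integral>x. \<phi> x * f x powr \<beta> \<partial>lborel)"

definition laplace_near :: "(real \<Rightarrow> real) \<Rightarrow> real \<Rightarrow> real" where
  "laplace_near \<phi> \<beta> = (\<integral>x. (if \<bar>x\<bar> < \<delta> then \<phi> x * f x powr \<beta> else 0) \<partial>lborel)"

definition laplace_far :: "(real \<Rightarrow> real) \<Rightarrow> real \<Rightarrow> real" where
  "laplace_far \<phi> \<beta> = (\<integral>x. (if \<delta> \<le> \<bar>x\<bar> then \<phi> x * f x powr \<beta> else 0) \<partial>lborel)"

lemma Nconst_eq_laplace_int: "Nconst f \<beta> = laplace_int (\<lambda>_. 1) \<beta>"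
  by (simp add: Nconst_def laplace_int_def)

lemma powr_le_powr_\<beta>0: "\<beta>0 \<le> \<beta> \<Longrightarrow> f x powr \<beta> \<le> f x powr \<beta>0"
  using powr_mono'[of \<beta>0 \<beta> "f x"] fpos[of x] fle1[of x] by simp

context
  fixes \<phi> :: "real \<Rightarrow> real" and k :: nat
  assumes \<phi>_measurable[measurable]: "\<phi> \<in> borel_measurable borel"
    and homogeneous: "\<And>c u. c > 0 \<Longrightarrow> \<phi> (c * u) = c^k * \<phi> u"
    and abs_le: "\<And>u. \<bar>\<phi> u\<bar> \<le> \<bar>u\<bar>^k"
    and k_le: "k \<le> 10"
begin

lemma integrable_restricted_weight:
  assumes "\<beta>0 \<le> \<beta>" and [measurable]: "Measurable.pred borel P"
  shows "integrable lborel (\<lambda>x. if P x then \<phi> x * f x powr \<beta> else 0)"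
proof (rule Bochner_Integration.integrable_bound[OF moments_integrable[OF k_le]])
  have "\<bar>\<phi> x * f x powr \<beta>\<bar> \<le> \<bar>x\<bar>^k * f x powr \<beta>0" for x
    unfolding abs_mult using abs_le[of x] powr_le_powr_\<beta>0[OF assms(1), of x] by (intro mult_mono) auto
  thus "AE x in lborel. norm (if P x then \<phi> x * f x powr \<beta> else 0) \<le> norm (\<bar>x\<bar>^k * f x powr \<beta>0)"
    by (intro AE_I2) auto
qed simp

lemma integrable_weight: "\<beta>0 \<le> \<beta> \<Longrightarrow> integrable lborel (\<lambda>x. \<phi> x * f x powr \<beta>)"
  using integrable_restricted_weight[of \<beta> "\<lambda>_. True"] by simp

lemma laplace_int_split: "\<beta>0 \<le> \<beta> \<Longrightarrow> laplace_int \<phi> \<beta> = laplace_near \<phi> \<beta> + laplace_far \<phi> \<beta>"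
  unfolding laplace_int_def laplace_near_def laplace_far_def
  by (subst Bochner_Integration.integral_add[symmetric]; (intro integrable_restricted_weight)?)
     (auto intro!: Bochner_Integration.integral_cong)

lemma laplace_near_eq_integral_F:
  assumes b: "\<beta> > 0"
  shows "sqrt \<beta> ^ (k+1) * laplace_near \<phi> \<beta> = (\<integral>u. \<phi> u * F \<beta> u \<partial>lborel)"
proof -
  define c where "c = 1 / sqrt \<beta>"
  have c: "c > 0" "sqrt \<beta> * c = 1" using b by (auto simp: c_def)
  have "laplace_near \<phi> \<beta> =
      \<bar>c\<bar> *\<^sub>R (\<integral>u. (if \<bar>0 + c * u\<bar> < \<delta> then \<phi> (0 + c * u) * f (0 + c * u) powr \<beta> else 0) \<partial>lborel)"
    unfolding laplace_near_def using c by (intro lborel_integral_real_affine) simp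
  also have "(\<lambda>u. if \<bar>0 + c * u\<bar> < \<delta> then \<phi> (0 + c * u) * f (0 + c * u) powr \<beta> else 0) =
      (\<lambda>u. c^k * (\<phi> u * F \<beta> u))"
    using abs_divide_sqrt_less_iff[OF b, of _ \<delta>] homogeneous[OF c(1)]
    by (auto simp: c_def F_def powr_eq_exp_ln_f)
  finally have "laplace_near \<phi> \<beta> = c^(k+1) * (\<integral>u. \<phi> u * F \<beta> u \<partial>lborel)"
    using c by simp
  hence "sqrt \<beta> ^ (k+1) * laplace_near \<phi> \<beta> = (sqrt \<beta> * c) ^ (k+1) * (\<integral>u. \<phi> u * F \<beta> u \<partial>lborel)"
    by (simp add: power_mult_distrib)
  thus ?thesis using c by simp
qed

lemma abs_laplace_far_le:
  assumes b: "\<beta>0 \<le> \<beta>"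
  shows "\<bar>laplace_far \<phi> \<beta>\<bar> \<le> s powr (\<beta> - \<beta>0) * (\<integral>x. \<bar>x\<bar>^k * f x powr \<beta>0 \<partial>lborel)"
proof -
  have "\<bar>laplace_far \<phi> \<beta>\<bar> \<le> (\<integral>x. \<bar>if \<delta> \<le> \<bar>x\<bar> then \<phi> x * f x powr \<beta> else 0\<bar> \<partial>lborel)"
    unfolding laplace_far_def by (rule integral_abs_bound)
  also have "\<dots> \<le> (\<integral>x. s powr (\<beta> - \<beta>0) * (\<bar>x\<bar>^k * f x powr \<beta>0) \<partial>lborel)"
  proof (rule integral_mono)
    show "integrable lborel (\<lambda>x. \<bar>if \<delta> \<le> \<bar>x\<bar> then \<phi> x * f x powr \<beta> else 0\<bar>)"
      using b by (intro integrable_abs integrable_restricted_weight) auto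
    show "integrable lborel (\<lambda>x. s powr (\<beta> - \<beta>0) * (\<bar>x\<bar>^k * f x powr \<beta>0))"
      using moments_integrable[OF k_le] by (rule integrable_mult_right)
    fix x
    show "\<bar>if \<delta> \<le> \<bar>x\<bar> then \<phi> x * f x powr \<beta> else 0\<bar> \<le> s powr (\<beta> - \<beta>0) * (\<bar>x\<bar>^k * f x powr \<beta>0)"
    proof (cases "\<delta> \<le> \<bar>x\<bar>")
      case True
      have "f x powr (\<beta> - \<beta>0) \<le> s powr (\<beta> - \<beta>0)"
        using b far_bound[OF True] fpos[of x] by (intro powr_mono2) auto
      moreover have "\<bar>\<phi> x * f x powr \<beta>\<bar> = \<bar>\<phi> x\<bar> * f x powr \<beta>0 * f x powr (\<beta> - \<beta>0)"
        by (simp add: abs_mult powr_add[symmetric])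
      ultimately have "\<bar>\<phi> x * f x powr \<beta>\<bar> \<le> \<bar>x\<bar>^k * f x powr \<beta>0 * s powr (\<beta> - \<beta>0)"
        using abs_le[of x] by (auto intro!: mult_mono)
      thus ?thesis using True by (simp add: mult_ac)
    qed auto
  qed
  also have "\<dots> = s powr (\<beta> - \<beta>0) * (\<integral>x. \<bar>x\<bar>^k * f x powr \<beta>0 \<partial>lborel)"
    by (rule integral_mult_right_zero)
  finally show ?thesis .
qed

lemma sqrt_power_laplace_far_tendsto_0:
  assumes m: "m \<le> 11" shows "((\<lambda>\<beta>. sqrt \<beta> ^ m * laplace_far \<phi> \<beta>) \<longlongrightarrow> 0) at_top"
proof -
  define a where "a = - ln s"
  have a: "a > 0" using s_pos s_less_1 by (simp add: a_def)
  define I where "I = (\<integral>x. \<bar>x\<bar>^k * f x powr \<beta>0 \<partial>lborel)"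
  have "((\<lambda>\<beta>. sqrt \<beta> ^ 11 * exp (- (a * \<beta>)) * (exp (a * \<beta>0) * I)) \<longlongrightarrow> 0) at_top"
    using a by (intro tendsto_mult_left_zero) real_asymp
  moreover have "\<forall>\<^sub>F \<beta> in at_top. norm (sqrt \<beta> ^ m * laplace_far \<phi> \<beta>) \<le> sqrt \<beta> ^ 11 * exp (- (a * \<beta>)) * (exp (a * \<beta>0) * I)"
    using eventually_ge_at_top[of "max \<beta>0 1"]
  proof eventually_elim
    case (elim \<beta>)
    have "norm (sqrt \<beta> ^ m * laplace_far \<phi> \<beta>) = sqrt \<beta> ^ m * \<bar>laplace_far \<phi> \<beta>\<bar>"
      using elim by (simp add: abs_mult)
    also have "\<dots> \<le> sqrt \<beta> ^ 11 * (s powr (\<beta> - \<beta>0) * I)"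
      using abs_laplace_far_le[of \<beta>] elim power_increasing[OF m, of "sqrt \<beta>"] unfolding I_def
      by (intro mult_mono) auto
    also have "s powr (\<beta> - \<beta>0) = exp (- (a * \<beta>)) * exp (a * \<beta>0)"
      using s_pos by (simp add: powr_def a_def exp_add[symmetric] algebra_simps)
    finally show ?case by (simp add: mult_ac)
  qed
  ultimately show ?thesis by (rule Lim_null_comparison[rotated])
qed

lemma integral_F_tendsto: "((\<lambda>\<beta>. \<integral>u. \<phi> u * F \<beta> u \<partial>lborel) \<longlongrightarrow> (\<integral>u. \<phi> u * G u \<partial>lborel)) at_top"
proof (rule integral_dominated_convergence_at_top[OF _ _ integrable_gaussian_bound[of k]])
  show "AE u in lborel. ((\<lambda>\<beta>. \<phi> u * F \<beta> u) \<longlongrightarrow> \<phi> u * G u) at_top"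
    by (intro AE_I2 tendsto_mult tendsto_const F_tendsto_G)
  show "\<forall>\<^sub>F \<beta> in at_top. AE u in lborel. norm (\<phi> u * F \<beta> u) \<le> \<bar>u\<bar>^k * exp (- \<bar>H\<bar> * u\<^sup>2 / 4)"
    using eventually_gt_at_top[of 0]
    by eventually_elim
       (use abs_le F_le F_nonneg in \<open>auto simp: abs_mult intro!: AE_I2 mult_mono\<close>)
qed auto

lemma laplace_int_asymp:
  "((\<lambda>\<beta>. sqrt \<beta> ^ (k+1) * laplace_int \<phi> \<beta>) \<longlongrightarrow> (\<integral>u. \<phi> u * G u \<partial>lborel)) at_top"
proof -
  have "((\<lambda>\<beta>. (\<integral>u. \<phi> u * F \<beta> u \<partial>lborel) + sqrt \<beta> ^ (k+1) * laplace_far \<phi> \<beta>)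
      \<longlongrightarrow> (\<integral>u. \<phi> u * G u \<partial>lborel) + 0) at_top"
    using k_le by (intro tendsto_add integral_F_tendsto sqrt_power_laplace_far_tendsto_0) auto
  moreover have "\<forall>\<^sub>F \<beta> in at_top. (\<integral>u. \<phi> u * F \<beta> u \<partial>lborel) + sqrt \<beta> ^ (k+1) * laplace_far \<phi> \<beta>
      = sqrt \<beta> ^ (k+1) * laplace_int \<phi> \<beta>"
    using eventually_ge_at_top[of "max \<beta>0 1"]
    by eventually_elim (simp add: laplace_near_eq_integral_F[symmetric] laplace_int_split algebra_simps)
  ultimately show ?thesis by (simp add: Lim_transform_eventually)
qed

end

text \<open>
  Since \<open>\<integral> u\<^sup>3 G = 0\<close>, the third moment is governed by the next order term of \<open>F\<close>,
  which is one power of \<open>\<surd>\<beta>\<close> smaller.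
\<close>

lemma integral_cube_sqrt_F_minus_G_tendsto:
  "((\<lambda>\<beta>. \<integral>u. u^3 * (sqrt \<beta> * (F \<beta> u - G u)) \<partial>lborel) \<longlongrightarrow> a3/6 * (\<integral>u. u^6 * G u \<partial>lborel)) at_top"
proof -
  let ?w = "\<lambda>u. (C * \<bar>u\<bar>^6 + \<bar>u\<bar>^4 / \<delta>) * exp (- \<bar>H\<bar> * u\<^sup>2 / 4)"
  have "integrable lborel (\<lambda>u. C * (\<bar>u\<bar>^6 * exp (- \<bar>H\<bar> * u\<^sup>2 / 4)) + (1/\<delta>) * (\<bar>u\<bar>^4 * exp (- \<bar>H\<bar> * u\<^sup>2 / 4)))"
    by (intro Bochner_Integration.integrable_add integrable_mult_right integrable_gaussian_bound)
  hence "integrable lborel ?w" by (simp add: algebra_simps)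
  hence "((\<lambda>\<beta>. \<integral>u. u^3 * (sqrt \<beta> * (F \<beta> u - G u)) \<partial>lborel) \<longlongrightarrow> (\<integral>u. u^3 * (a3/6 * u^3 * G u) \<partial>lborel)) at_top"
  proof (rule integral_dominated_convergence_at_top[rotated 2])
    show "AE u in lborel. ((\<lambda>\<beta>. u^3 * (sqrt \<beta> * (F \<beta> u - G u))) \<longlongrightarrow> u^3 * (a3/6 * u^3 * G u)) at_top"
      by (intro AE_I2 tendsto_mult tendsto_const sqrt_F_minus_G_tendsto)
    show "\<forall>\<^sub>F \<beta> in at_top. AE u in lborel. norm (u^3 * (sqrt \<beta> * (F \<beta> u - G u))) \<le> ?w u"
      using eventually_gt_at_top[of 0]
      by eventually_elim (intro AE_I2, simp only: real_norm_def abs_sqrt_F_minus_G_le)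
  qed auto
  moreover have "(\<integral>u. u^3 * (a3/6 * u^3 * G u) \<partial>lborel) = a3/6 * (\<integral>u. u^6 * G u \<partial>lborel)"
    by (subst integral_mult_right_zero[symmetric])
       (auto simp: power_add[symmetric] mult_ac intro!: Bochner_Integration.integral_cong)
  ultimately show ?thesis by simp
qed

lemma laplace_near_cube_eq:
  assumes b: "\<beta> > 0"
  shows "sqrt \<beta> ^ 5 * laplace_near (\<lambda>x. x^3) \<beta> = (\<integral>u. u^3 * (sqrt \<beta> * (F \<beta> u - G u)) \<partial>lborel)"
proof -
  have "(\<integral>u. u^3 * (sqrt \<beta> * (F \<beta> u - G u)) \<partial>lborel) =
      (\<integral>u. sqrt \<beta> * (u^3 * F \<beta> u) - sqrt \<beta> * (u^3 * G u) \<partial>lborel)"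
    by (intro Bochner_Integration.integral_cong) (auto simp: algebra_simps)
  also have "\<dots> = sqrt \<beta> * (\<integral>u. u^3 * F \<beta> u \<partial>lborel)"
    using integrable_power_F[OF b, of 3] integrable_power_G[of 3]
    by (simp add: integral_power3_G)
  also have "(\<integral>u. u^3 * F \<beta> u \<partial>lborel) = sqrt \<beta> ^ 4 * laplace_near (\<lambda>x. x^3) \<beta>"
    using laplace_near_eq_integral_F[of "\<lambda>x. x^3" 3 \<beta>] b by (simp add: power_mult_distrib power_abs)
  finally show ?thesis by (simp add: numeral_eq_Suc mult_ac)
qed

lemma laplace_int_cube_asymp:
  "((\<lambda>\<beta>. sqrt \<beta> ^ 5 * laplace_int (\<lambda>x. x^3) \<beta>) \<longlongrightarrow> a3/6 * (\<integral>u. u^6 * G u \<partial>lborel)) at_top"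
proof -
  have "((\<lambda>\<beta>. (\<integral>u. u^3 * (sqrt \<beta> * (F \<beta> u - G u)) \<partial>lborel) + sqrt \<beta> ^ 5 * laplace_far (\<lambda>x. x^3) \<beta>)
      \<longlongrightarrow> a3/6 * (\<integral>u. u^6 * G u \<partial>lborel) + 0) at_top"
    by (intro tendsto_add integral_cube_sqrt_F_minus_G_tendsto sqrt_power_laplace_far_tendsto_0[of _ 3])
       (auto simp: power_mult_distrib power_abs)
  moreover have "\<forall>\<^sub>F \<beta> in at_top. (\<integral>u. u^3 * (sqrt \<beta> * (F \<beta> u - G u)) \<partial>lborel) + sqrt \<beta> ^ 5 * laplace_far (\<lambda>x. x^3) \<beta>
      = sqrt \<beta> ^ 5 * laplace_int (\<lambda>x. x^3) \<beta>"
    using eventually_ge_at_top[of "max \<beta>0 1"]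
  proof eventually_elim
    case (elim \<beta>)
    have "laplace_int (\<lambda>x. x^3) \<beta> = laplace_near (\<lambda>x. x^3) \<beta> + laplace_far (\<lambda>x. x^3) \<beta>"
      using elim by (intro laplace_int_split[of _ 3]) (auto simp: power_mult_distrib power_abs)
    thus ?case using laplace_near_cube_eq[of \<beta>] elim by (simp add: algebra_simps)
  qed
  ultimately show ?thesis by (simp add: Lim_transform_eventually)
qed

lemma sqrt_Nconst_tendsto: "((\<lambda>\<beta>. sqrt \<beta> * Nconst f \<beta>) \<longlongrightarrow> sqrt (2 * pi / \<bar>H\<bar>)) at_top"
  using laplace_int_asymp[of "\<lambda>_. 1" 0] by (simp add: Nconst_eq_laplace_int integral_G)

lemma eventually_large_\<beta>: "\<forall>\<^sub>F \<beta> in at_top. \<beta>0 \<le> \<beta> \<and> 0 < \<beta> \<and> 0 < Nconst f \<beta>"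
proof -
  have "\<forall>\<^sub>F \<beta> in at_top. 0 < sqrt \<beta> * Nconst f \<beta>"
    using order_tendstoD(1)[OF sqrt_Nconst_tendsto, of 0] Hneg pi_gt_zero by (simp add: divide_pos_neg)
  with eventually_ge_at_top[of "max \<beta>0 1"] show ?thesis
    by eventually_elim (auto simp: zero_less_mult_iff)
qed

lemma normalised_laplace_int_tendsto:
  assumes "((\<lambda>\<beta>. sqrt \<beta> ^ (k+1) * laplace_int \<phi> \<beta>) \<longlongrightarrow> L) at_top"
  shows "((\<lambda>\<beta>. sqrt \<beta> ^ k * laplace_int \<phi> \<beta> / Nconst f \<beta>) \<longlongrightarrow> L / sqrt (2 * pi / \<bar>H\<bar>)) at_top"
proof -
  have "((\<lambda>\<beta>. sqrt \<beta> ^ (k+1) * laplace_int \<phi> \<beta> / (sqrt \<beta> * Nconst f \<beta>)) \<longlongrightarrow> L / sqrt (2 * pi / \<bar>H\<bar>)) at_top"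
    using Hneg by (intro tendsto_divide assms sqrt_Nconst_tendsto) auto
  thus ?thesis
    by (rule Lim_transform_eventually) (use eventually_large_\<beta> in \<open>eventually_elim, simp\<close>)
qed

lemma cube_moment_tendsto:
  "((\<lambda>\<beta>. \<beta>^2 * laplace_int (\<lambda>x. x^3) \<beta> / Nconst f \<beta>) \<longlongrightarrow> a3/6 * (15 / \<bar>H\<bar>^3)) at_top"
proof -
  have "((\<lambda>\<beta>. sqrt \<beta> ^ 4 * laplace_int (\<lambda>x. x^3) \<beta> / Nconst f \<beta>) \<longlongrightarrow>
      a3/6 * (\<integral>u. u^6 * G u \<partial>lborel) / sqrt (2 * pi / \<bar>H\<bar>)) at_top"
    using laplace_int_cube_asymp by (intro normalised_laplace_int_tendsto) simp
  also have "a3/6 * (\<integral>u. u^6 * G u \<partial>lborel) / sqrt (2 * pi / \<bar>H\<bar>) = a3/6 * (15 / \<bar>H\<bar>^3)"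
    using Hneg by (simp add: integral_power6_G)
  finally show ?thesis
    by (rule Lim_transform_eventually)
       (use eventually_large_\<beta> in \<open>eventually_elim, simp add: real_sqrt_power_even\<close>)
qed

lemma sixth_moment_tendsto:
  "((\<lambda>\<beta>. \<beta>^3 * laplace_int (\<lambda>x. x^6) \<beta> / Nconst f \<beta>) \<longlongrightarrow> 15 / \<bar>H\<bar>^3) at_top"
proof -
  have "((\<lambda>\<beta>. sqrt \<beta> ^ 6 * laplace_int (\<lambda>x. x^6) \<beta> / Nconst f \<beta>) \<longlongrightarrow>
      (\<integral>u. u^6 * G u \<partial>lborel) / sqrt (2 * pi / \<bar>H\<bar>)) at_top"
    by (intro normalised_laplace_int_tendsto laplace_int_asymp) (auto simp: power_mult_distrib power_abs)
  also have "(\<integral>u. u^6 * G u \<partial>lborel) / sqrt (2 * pi / \<bar>H\<bar>) = 15 / \<bar>H\<bar>^3"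
    using Hneg by (simp add: integral_power6_G)
  finally show ?thesis
    by (rule Lim_transform_eventually)
       (use eventually_large_\<beta> in \<open>eventually_elim, simp add: real_sqrt_power_even\<close>)
qed

lemma ninth_abs_moment_tendsto_0:
  "((\<lambda>\<beta>. \<beta>^4 * laplace_int (\<lambda>x. \<bar>x\<bar>^9) \<beta> / Nconst f \<beta>) \<longlongrightarrow> 0) at_top"
proof -
  have "((\<lambda>\<beta>. sqrt \<beta> ^ 9 * laplace_int (\<lambda>x. \<bar>x\<bar>^9) \<beta> / Nconst f \<beta>) \<longlongrightarrow>
      (\<integral>u. \<bar>u\<bar>^9 * G u \<partial>lborel) / sqrt (2 * pi / \<bar>H\<bar>)) at_top"
    by (intro normalised_laplace_int_tendsto laplace_int_asymp) (auto simp: power_mult_distrib abs_mult)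
  hence "((\<lambda>\<beta>. inverse (sqrt \<beta>) * (sqrt \<beta> ^ 9 * laplace_int (\<lambda>x. \<bar>x\<bar>^9) \<beta> / Nconst f \<beta>)) \<longlongrightarrow>
      0 * ((\<integral>u. \<bar>u\<bar>^9 * G u \<partial>lborel) / sqrt (2 * pi / \<bar>H\<bar>))) at_top"
    by (intro tendsto_mult) real_asymp
  hence "((\<lambda>\<beta>. inverse (sqrt \<beta>) * (sqrt \<beta> ^ 9 * laplace_int (\<lambda>x. \<bar>x\<bar>^9) \<beta> / Nconst f \<beta>)) \<longlongrightarrow> 0) at_top"
    by simp
  thus ?thesis
    by (rule Lim_transform_eventually)
       (use eventually_large_\<beta> in \<open>eventually_elim, simp add: sqrt_power_odd[of _ 4, simplified]\<close>)
qed

definition cubic_coeff :: "real \<Rightarrow> real" where "cubic_coeff \<beta> = \<beta> * a3 / 6"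

definition sd_y :: "real \<Rightarrow> real" where "sd_y \<beta> = sqrt (1 / (\<beta> * \<bar>H\<bar>))"

definition char_x :: "real \<Rightarrow> real \<Rightarrow> complex" where
  "char_x t \<beta> = (\<integral>x. (f x powr \<beta> / Nconst f \<beta>) *\<^sub>R iexp (t * (- cubic_coeff \<beta> * x^3)) \<partial>lborel)"

definition char_y :: "real \<Rightarrow> real \<Rightarrow> complex" where
  "char_y t \<beta> = (\<integral>y. normal_density 0 (sd_y \<beta>) y *\<^sub>R iexp (t * (cubic_coeff \<beta> * y^3)) \<partial>lborel)"

text \<open>Each of the two sums contributes the variance \<open>V/\<ell>\<close> to the limit; the \<open>x\<close>-sum also the mean \<open>-V/\<ell>\<close>.\<close>

definition V :: real where "V = 15 * a3\<^sup>2 / (36 * \<bar>H\<bar>^3)"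

lemma V_nonneg: "V \<ge> 0"
  by (simp add: V_def)

lemma char_x_taylor2_le:
  assumes b: "\<beta>0 \<le> \<beta>" and N: "Nconst f \<beta> > 0"
  shows "cmod (char_x t \<beta> - (1 + \<i> * complex_of_real (t * (- cubic_coeff \<beta> * laplace_int (\<lambda>x. x^3) \<beta> / Nconst f \<beta>))
            - complex_of_real (t^2/2 * (cubic_coeff \<beta> ^ 2 * laplace_int (\<lambda>x. x^6) \<beta> / Nconst f \<beta>))))
         \<le> \<bar>t\<bar>^3 / 6 * (\<bar>cubic_coeff \<beta>\<bar>^3 * laplace_int (\<lambda>x. \<bar>x\<bar>^9) \<beta> / Nconst f \<beta>)"
proof -
  let ?c = "cubic_coeff \<beta>" and ?N = "Nconst f \<beta>" and ?p = "\<lambda>x. f x powr \<beta> / Nconst f \<beta>"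
  have e0: "?p x = (1/?N) * (1 * f x powr \<beta>)" for x by simp
  have e1: "?p x * (- ?c * x^3) = (- ?c / ?N) * (x^3 * f x powr \<beta>)" for x by simp
  have e2: "?p x * (- ?c * x^3)^2 = (?c^2 / ?N) * (x^6 * f x powr \<beta>)" for x
    by (simp add: power_mult_distrib field_simps)
  have e3: "?p x * \<bar>- ?c * x^3\<bar>^3 = (\<bar>?c\<bar>^3 / ?N) * (\<bar>x\<bar>^9 * f x powr \<beta>)" for x
    by (simp add: abs_mult power_mult_distrib power_abs mult_ac flip: power_mult)
  have "cmod (char_x t \<beta> -
           (1 + \<i> * complex_of_real (t * (\<integral>x. ?p x * (- ?c * x^3) \<partial>lborel))
              - complex_of_real (t^2 / 2 * (\<integral>x. ?p x * (- ?c * x^3) ^ 2 \<partial>lborel))))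
         \<le> \<bar>t\<bar>^3 / 6 * (\<integral>x. ?p x * \<bar>- ?c * x^3\<bar> ^ 3 \<partial>lborel)"
    unfolding char_x_def
  proof (rule cmod_integral_iexp_minus_taylor2_le)
    show "integrable lborel ?p"
      unfolding e0 using b by (intro integrable_mult_right integrable_weight[of "\<lambda>_. 1" 0]) auto
    show "integrable lborel (\<lambda>x. ?p x * (- ?c * x^3))"
      unfolding e1 using b by (intro integrable_mult_right integrable_weight[of _ 3]) (auto simp: power_mult_distrib power_abs)
    show "integrable lborel (\<lambda>x. ?p x * (- ?c * x^3)^2)"
      unfolding e2 using b by (intro integrable_mult_right integrable_weight[of _ 6]) (auto simp: power_mult_distrib power_abs)
    show "integrable lborel (\<lambda>x. ?p x * \<bar>- ?c * x^3\<bar>^3)"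
      unfolding e3 using b by (intro integrable_mult_right integrable_weight[of _ 9]) (auto simp: power_mult_distrib abs_mult)
    show "(\<integral>x. ?p x \<partial>lborel) = 1"
      using N by (simp add: Nconst_def)
  qed (use N in auto)
  thus ?thesis
    unfolding e1 e2 e3 integral_mult_right_zero by (simp add: laplace_int_def)
qed

lemma char_y_taylor2_le:
  assumes b: "\<beta> > 0"
  shows "cmod (char_y t \<beta> - (1 + \<i> * complex_of_real (t * 0)
            - complex_of_real (t^2/2 * (cubic_coeff \<beta> ^ 2 * (15 * sd_y \<beta> ^ 6)))))
         \<le> \<bar>t\<bar>^3 / 6 * (\<bar>cubic_coeff \<beta>\<bar>^3 * (2^4 * sd_y \<beta> ^ 9 * 24 * sqrt (2 / pi)))"
proof -
  let ?c = "cubic_coeff \<beta>" and ?s = "sd_y \<beta>"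
  have s: "?s > 0" using b Hneg by (simp add: sd_y_def mult_pos_neg)
  let ?p = "normal_density 0 ?s"
  have e1: "?p x * (?c * x^3) = ?c * (?p x * (x - 0)^(2*1+1))" for x by simp
  have e2: "?p x * (?c * x^3)^2 = ?c^2 * (?p x * (x - 0)^(2*3))" for x by (simp add: power_mult_distrib)
  have e3: "?p x * \<bar>?c * x^3\<bar>^3 = \<bar>?c\<bar>^3 * (?p x * \<bar>x - 0\<bar>^(2*4+1))" for x
    by (simp add: power_mult_distrib abs_mult power_abs)
  have "cmod (char_y t \<beta> -
           (1 + \<i> * complex_of_real (t * (\<integral>x. ?p x * (?c * x^3) \<partial>lborel))
              - complex_of_real (t^2 / 2 * (\<integral>x. ?p x * (?c * x^3) ^ 2 \<partial>lborel))))
         \<le> \<bar>t\<bar>^3 / 6 * (\<integral>x. ?p x * \<bar>?c * x^3\<bar> ^ 3 \<partial>lborel)"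
    unfolding char_y_def
  proof (rule cmod_integral_iexp_minus_taylor2_le)
    show "integrable lborel (\<lambda>x. ?p x * (?c * x^3))"
      unfolding e1 using s by (intro integrable_mult_right integrable_normal_moment)
    show "integrable lborel (\<lambda>x. ?p x * (?c * x^3)^2)"
      unfolding e2 using s by (intro integrable_mult_right integrable_normal_moment)
    show "integrable lborel (\<lambda>x. ?p x * \<bar>?c * x^3\<bar>^3)"
      unfolding e3 using s by (intro integrable_mult_right integrable_normal_moment_abs)
  qed (use s integrable_normal_density integral_normal_density in auto)
  moreover have "(\<integral>x. ?p x * (x - 0)^(2*3) \<partial>lborel) = 15 * ?s^6"
    using integral_normal_moment_even[OF s, of 0 3] s by (simp add: fact_numeral field_simps power_mult_distrib)
  moreover have "(\<integral>x. ?p x * \<bar>x - 0\<bar>^(2*4+1) \<partial>lborel) = 2^4 * ?s^9 * 24 * sqrt (2 / pi)"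
    using integral_normal_moment_abs_odd[OF s, of 0 4] by (simp add: fact_numeral)
  ultimately show ?thesis
    using integral_normal_moment_odd[OF s, of 0 1] unfolding e1 e2 e3 integral_mult_right_zero by simp
qed

lemma char_x_expansion:
  "((\<lambda>\<beta>. complex_of_real \<beta> * (char_x t \<beta> - 1)) \<longlongrightarrow>
     \<i> * complex_of_real (t * - V) - complex_of_real (t^2/2 * V)) at_top"
proof (rule tendsto_scaled_minus_one_of_expansion[OF _ _ _ _ _])
  show "\<forall>\<^sub>F \<beta> in at_top. cmod (char_x t \<beta> - (1 + \<i> * complex_of_real (t * (- cubic_coeff \<beta> * laplace_int (\<lambda>x. x^3) \<beta> / Nconst f \<beta>))
            - complex_of_real (t^2/2 * (cubic_coeff \<beta> ^ 2 * laplace_int (\<lambda>x. x^6) \<beta> / Nconst f \<beta>))))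
         \<le> \<bar>t\<bar>^3 / 6 * (\<bar>cubic_coeff \<beta>\<bar>^3 * laplace_int (\<lambda>x. \<bar>x\<bar>^9) \<beta> / Nconst f \<beta>)"
    using eventually_large_\<beta> by eventually_elim (intro char_x_taylor2_le, auto)
  show "\<forall>\<^sub>F \<beta> in at_top. (\<beta>::real) \<ge> 0"
    by (rule eventually_ge_at_top)
  have "((\<lambda>\<beta>. - (a3/6) * (\<beta>^2 * laplace_int (\<lambda>x. x^3) \<beta> / Nconst f \<beta>)) \<longlongrightarrow> - (a3/6) * (a3/6 * (15 / \<bar>H\<bar>^3))) at_top"
    by (intro tendsto_mult tendsto_const cube_moment_tendsto)
  thus "((\<lambda>\<beta>. \<beta> * (- cubic_coeff \<beta> * laplace_int (\<lambda>x. x^3) \<beta> / Nconst f \<beta>)) \<longlongrightarrow> - V) at_top"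
    by (simp add: cubic_coeff_def V_def power2_eq_square mult_ac)
  have "((\<lambda>\<beta>. (a3^2/36) * (\<beta>^3 * laplace_int (\<lambda>x. x^6) \<beta> / Nconst f \<beta>)) \<longlongrightarrow> (a3^2/36) * (15 / \<bar>H\<bar>^3)) at_top"
    by (intro tendsto_mult tendsto_const sixth_moment_tendsto)
  thus "((\<lambda>\<beta>. \<beta> * (cubic_coeff \<beta> ^ 2 * laplace_int (\<lambda>x. x^6) \<beta> / Nconst f \<beta>)) \<longlongrightarrow> V) at_top"
    by (simp add: cubic_coeff_def V_def power2_eq_square power3_eq_cube mult_ac)
  have "((\<lambda>\<beta>. (\<bar>t\<bar>^3 / 6 * \<bar>a3 / 6\<bar>^3) * (\<beta>^4 * laplace_int (\<lambda>x. \<bar>x\<bar>^9) \<beta> / Nconst f \<beta>)) \<longlongrightarrow> (\<bar>t\<bar>^3 / 6 * \<bar>a3 / 6\<bar>^3) * 0) at_top"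
    by (intro tendsto_mult tendsto_const ninth_abs_moment_tendsto_0)
  hence "((\<lambda>\<beta>. (\<bar>t\<bar>^3 / 6 * \<bar>a3 / 6\<bar>^3) * (\<beta>^4 * laplace_int (\<lambda>x. \<bar>x\<bar>^9) \<beta> / Nconst f \<beta>)) \<longlongrightarrow> 0) at_top"
    by simp
  thus "((\<lambda>\<beta>. \<beta> * (\<bar>t\<bar>^3 / 6 * (\<bar>cubic_coeff \<beta>\<bar>^3 * laplace_int (\<lambda>x. \<bar>x\<bar>^9) \<beta> / Nconst f \<beta>))) \<longlongrightarrow> 0) at_top"
    by (rule Lim_transform_eventually)
       (use eventually_ge_at_top[of 0] in \<open>eventually_elim, simp add: cubic_coeff_def abs_mult power_mult_distrib power4_eq_xxxx power3_eq_cube\<close>)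
qed

lemma char_y_expansion:
  "((\<lambda>\<beta>. complex_of_real \<beta> * (char_y t \<beta> - 1)) \<longlongrightarrow>
     \<i> * complex_of_real (t * 0) - complex_of_real (t^2/2 * V)) at_top"
proof (rule tendsto_scaled_minus_one_of_expansion[OF _ _ _ _ _])
  show "\<forall>\<^sub>F \<beta> in at_top. cmod (char_y t \<beta> - (1 + \<i> * complex_of_real (t * 0)
            - complex_of_real (t^2/2 * (cubic_coeff \<beta> ^ 2 * (15 * sd_y \<beta> ^ 6)))))
         \<le> \<bar>t\<bar>^3 / 6 * (\<bar>cubic_coeff \<beta>\<bar>^3 * (2^4 * sd_y \<beta> ^ 9 * 24 * sqrt (2 / pi)))"
    using eventually_gt_at_top[of 0] by eventually_elim (rule char_y_taylor2_le)
  show "\<forall>\<^sub>F \<beta> in at_top. (\<beta>::real) \<ge> 0"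
    by (rule eventually_ge_at_top)
  show "((\<lambda>\<beta>::real. \<beta> * 0) \<longlongrightarrow> 0) at_top"
    by simp
  have "\<forall>\<^sub>F \<beta> in at_top. \<beta> * (cubic_coeff \<beta> ^ 2 * (15 * sd_y \<beta> ^ 6)) = V"
    using eventually_gt_at_top[of 0]
  proof eventually_elim
    case (elim \<beta>)
    have "sd_y \<beta> ^ 6 = (1 / (\<beta> * \<bar>H\<bar>))^3"
      using real_sqrt_power_even[of 6 "1 / (\<beta> * \<bar>H\<bar>)"] elim by (simp add: sd_y_def)
    moreover have "\<bar>H\<bar> > 0" using Hneg by simp
    ultimately show ?case
      using elim by (simp add: cubic_coeff_def V_def field_simps power2_eq_square power3_eq_cube)
  qed
  thus "((\<lambda>\<beta>. \<beta> * (cubic_coeff \<beta> ^ 2 * (15 * sd_y \<beta> ^ 6))) \<longlongrightarrow> V) at_top"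
    by (rule tendsto_eventually)
  define K where "K = \<bar>t\<bar>^3 / 6 * \<bar>a3 / 6\<bar>^3 * (2^4 * 24 * sqrt (2 / pi)) / \<bar>H\<bar>^4"
  have "((\<lambda>\<beta>. K * sqrt (1 / (\<beta> * \<bar>H\<bar>))) \<longlongrightarrow> K * 0) at_top"
    using Hneg by (intro tendsto_mult tendsto_const) real_asymp
  moreover have "\<forall>\<^sub>F \<beta> in at_top. K * sqrt (1 / (\<beta> * \<bar>H\<bar>)) =
      \<beta> * (\<bar>t\<bar>^3 / 6 * (\<bar>cubic_coeff \<beta>\<bar>^3 * (2^4 * sd_y \<beta> ^ 9 * 24 * sqrt (2 / pi))))"
    using eventually_gt_at_top[of 0]
  proof eventually_elim
    case (elim \<beta>)
    have s9: "sd_y \<beta> ^ 9 = (1 / (\<beta> * \<bar>H\<bar>))^4 * sd_y \<beta>"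
      using sqrt_power_odd[of "1 / (\<beta> * \<bar>H\<bar>)" 4] elim by (simp add: sd_y_def)
    have "\<bar>H\<bar> > 0" using Hneg by simp
    thus ?case
      unfolding sd_y_def[symmetric] s9 using elim
      by (simp add: K_def cubic_coeff_def abs_mult field_simps power_mult_distrib power4_eq_xxxx power3_eq_cube)
  qed
  ultimately show "((\<lambda>\<beta>. \<beta> * (\<bar>t\<bar>^3 / 6 * (\<bar>cubic_coeff \<beta>\<bar>^3 * (2^4 * sd_y \<beta> ^ 9 * 24 * sqrt (2 / pi))))) \<longlongrightarrow> 0) at_top"
    by (simp add: Lim_transform_eventually)
qed

lemma char_W_law_eq:
  assumes "l * real d \<ge> \<beta>0" and "l * real d > 0" and "Nconst f (l * real d) > 0"
  shows "char (W_law f H a3 l d) t = (char_x t (l * real d) * char_y t (l * real d)) ^ d"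
  using assms Hneg integrable_weight[of "\<lambda>_. 1" 0 "l * real d"]
  by (subst char_W_law) (auto simp: char_x_def char_y_def cubic_coeff_def sd_y_def)

lemma eventually_large_d:
  assumes "l > 0"
  shows "\<forall>\<^sub>F d in sequentially. \<beta>0 \<le> l * real d \<and> 0 < l * real d \<and> 0 < Nconst f (l * real d)"
  using eventually_large_\<beta>
    filterlim_tendsto_pos_mult_at_top[OF tendsto_const assms filterlim_real_sequentially]
  by (rule eventually_compose_filterlim)

lemma real_distribution_W_law_eventually:
  assumes "l > 0"
  shows "\<forall>\<^sub>F d in sequentially. real_distribution (W_law f H a3 l d)"
  using eventually_large_d[OF assms]
  by eventually_elim (rule real_distribution_W_law, use Hneg integrable_weight[of "\<lambda>_. 1" 0] in auto)

lemma char_W_law_tendsto: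
  assumes l: "l > 0"
  shows "(\<lambda>d. char (W_law f H a3 l d) t) \<longlonglongrightarrow> char (normal_law (- V / l) (2 * V / l)) t"
proof -
  define w where "w = \<i> * complex_of_real (t * - V) - complex_of_real (t^2/2 * V)
      + (\<i> * complex_of_real (t * 0) - complex_of_real (t^2/2 * V))"
  define z where "z d = char_x t (l * real d) * char_y t (l * real d)" for d
  have "((\<lambda>\<beta>. complex_of_real \<beta> * (char_x t \<beta> * char_y t \<beta> - 1)) \<longlongrightarrow> w) at_top"
    unfolding w_def by (intro tendsto_scaled_product_minus_one char_x_expansion char_y_expansion filterlim_ident)
  hence "(\<lambda>d. complex_of_real (l * real d) * (z d - 1)) \<longlonglongrightarrow> w"
    unfolding z_def
    by (rule filterlim_compose[OF _ filterlim_tendsto_pos_mult_at_top[OF tendsto_const l filterlim_real_sequentially]])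
  hence "(\<lambda>d. complex_of_real (l * real d) * (z d - 1) / complex_of_real l) \<longlonglongrightarrow> w / complex_of_real l"
    by (intro tendsto_divide tendsto_const) (use l in auto)
  hence "(\<lambda>d. of_nat d * (z d - 1)) \<longlonglongrightarrow> w / complex_of_real l"
    using l by simp
  hence "(\<lambda>d. z d ^ d) \<longlonglongrightarrow> exp (w / complex_of_real l)"
    by (rule LIMSEQ_power_complex_exp)
  moreover have "w / complex_of_real l = \<i> * complex_of_real (t * (- V / l)) - complex_of_real (2 * V / l * t^2 / 2)"
    using l by (simp add: w_def field_simps)
  hence "exp (w / complex_of_real l) = char (normal_law (- V / l) (2 * V / l)) t"
    using l V_nonneg by (simp add: char_normal_law)
  moreover have "\<forall>\<^sub>F d in sequentially. z d ^ d = char (W_law f H a3 l d) t"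
    using eventually_large_d[OF l] by eventually_elim (simp add: z_def char_W_law_eq)
  ultimately show ?thesis by (simp add: Lim_transform_eventually)
qed

theorem weak_conv_W_law:
  assumes l: "l > 0"
  shows "weak_conv_m (\<lambda>d. W_law f H a3 l d)
           (normal_law (- 15 * a3\<^sup>2 / (36 * l * \<bar>H\<bar> ^ 3)) (30 * a3\<^sup>2 / (36 * l * \<bar>H\<bar> ^ 3)))"
proof -
  have "- 15 * a3\<^sup>2 / (36 * l * \<bar>H\<bar> ^ 3) = - V / l" "30 * a3\<^sup>2 / (36 * l * \<bar>H\<bar> ^ 3) = 2 * V / l"
    by (simp_all add: V_def)
  thus ?thesis
    using l V_nonneg by (simp only:)
      (intro levy_continuity_eventually real_distribution_W_law_eventually real_distribution_normal_law
        char_W_law_tendsto; simp)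
qed

end

section \<open>Verifying the setting of Laplace's method\<close>

lemma deriv_ln_iterates:
  fixes f :: "real \<Rightarrow> real"
  assumes pos: "\<And>x. f x > 0" and diff: "\<And>k x. k < 4 \<Longrightarrow> (deriv ^^ k) f differentiable (at x)"
  defines "h \<equiv> (\<lambda>x. ln (f x))"
  shows "\<And>k x. k < 3 \<Longrightarrow> ((deriv ^^ k) h has_real_derivative (deriv ^^ Suc k) h x) (at x)"
    and "continuous_on UNIV ((deriv ^^ 3) h)"
    and "deriv h x = deriv f x / f x"
proof -
  define f1 where "f1 = deriv f"
  define f2 where "f2 = deriv f1"
  define f3 where "f3 = deriv f2"
  have D0: "(f has_real_derivative f1 x) (at x)" for x
    using diff[of 0 x] by (simp add: f1_def DERIV_deriv_iff_real_differentiable)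
  have D1: "(f1 has_real_derivative f2 x) (at x)" for x
    using diff[of 1 x] by (simp add: f1_def f2_def DERIV_deriv_iff_real_differentiable)
  have D2: "(f2 has_real_derivative f3 x) (at x)" for x
    using diff[of 2 x] by (simp add: f1_def f2_def f3_def DERIV_deriv_iff_real_differentiable numeral_2_eq_2)
  have c3: "isCont f3 x" for x
    using diff[of 3 x] by (intro differentiable_imp_continuous_within)
      (simp add: f1_def f2_def f3_def numeral_3_eq_3)
  have fne: "f x \<noteq> 0" for x using pos[of x] by simp
  define h1 where "h1 x = f1 x / f x" for x
  define h2 where "h2 x = f2 x / f x - (f1 x / f x) * (f1 x / f x)" for x
  define h3 where "h3 x = f3 x / f x - f2 x * f1 x / (f x)^2 - 2 * (f1 x / f x) * (f2 x / f x - f1 x * f1 x / (f x)^2)" for x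
  have E0: "(h has_real_derivative h1 x) (at x)" for x
    unfolding h_def h1_def
    by (rule DERIV_ln[THEN DERIV_chain2, OF pos D0, THEN DERIV_cong]) (simp add: divide_inverse mult.commute)
  have E1: "(h1 has_real_derivative h2 x) (at x)" for x
    unfolding h1_def[abs_def] h2_def
    by (rule DERIV_cong[OF DERIV_divide[OF D1 D0 fne]]) (simp add: field_simps power2_eq_square fne)
  have E2: "(h2 has_real_derivative h3 x) (at x)" for x
  proof -
    have q: "((\<lambda>x. f1 x / f x) has_real_derivative (f2 x * f x - f1 x * f1 x) / (f x * f x)) (at x)"
      by (rule DERIV_divide[OF D1 D0 fne])
    show ?thesis unfolding h2_def[abs_def] h3_def
      by (rule DERIV_cong[OF DERIV_diff[OF DERIV_divide[OF D2 D0 fne] DERIV_mult[OF q q]]])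
         (simp add: field_simps power2_eq_square fne)
  qed
  have dh: "deriv h = h1" "deriv h1 = h2" "deriv h2 = h3"
    using E0 E1 E2 by (auto intro!: ext DERIV_imp_deriv)
  have iterates: "(deriv ^^ 1) h = h1" "(deriv ^^ 2) h = h2" "(deriv ^^ 3) h = h3"
    by (simp_all add: numeral_2_eq_2 numeral_3_eq_3 dh)
  show "((deriv ^^ k) h has_real_derivative (deriv ^^ Suc k) h x) (at x)" if "k < 3" for k x
  proof -
    from that have "k = 0 \<or> k = 1 \<or> k = 2" by auto
    thus ?thesis using E0 E1 E2 by (auto simp: numeral_2_eq_2 dh)
  qed
  show "continuous_on UNIV ((deriv ^^ 3) h)"
    unfolding iterates h3_def using c3 fne DERIV_isCont[OF D0] DERIV_isCont[OF D1] DERIV_isCont[OF D2]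
    by (intro continuous_at_imp_continuous_on ballI) (intro continuous_intros; simp)
  show "deriv h x = deriv f x / f x"
    by (simp add: dh h1_def f1_def)
qed

lemma taylor_cubic_at_0:
  fixes h :: "real \<Rightarrow> real"
  assumes D: "\<And>k x. k < 3 \<Longrightarrow> ((deriv ^^ k) h has_real_derivative (deriv ^^ Suc k) h x) (at x)"
    and h0: "h 0 = 0" and dh0: "deriv h 0 = 0" and x: "x \<noteq> 0"
  shows "\<exists>\<xi>. \<bar>\<xi>\<bar> < \<bar>x\<bar> \<and> h x = (deriv ^^ 2) h 0 * x\<^sup>2 / 2 + (deriv ^^ 3) h \<xi> * x^3 / 6"
proof -
  have "\<exists>t. (if x < 0 then x < t \<and> t < 0 else 0 < t \<and> t < x) \<and>
      h x = (\<Sum>m<3. ((deriv ^^ m) h 0 / fact m) * (x - 0)^m) + ((deriv ^^ 3) h t / fact 3) * (x - 0)^3"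
    by (rule Taylor[of 3 "\<lambda>m. (deriv ^^ m) h" h "- \<bar>x\<bar>" "\<bar>x\<bar>" 0 x]) (use D x in auto)
  then obtain \<xi> where \<xi>: "if x < 0 then x < \<xi> \<and> \<xi> < 0 else 0 < \<xi> \<and> \<xi> < x"
    and T: "h x = (\<Sum>m<3. ((deriv ^^ m) h 0 / fact m) * (x - 0)^m) + ((deriv ^^ 3) h \<xi> / fact 3) * (x - 0)^3"
    by blast
  have "h x = (deriv ^^ 2) h 0 * x\<^sup>2 / 2 + (deriv ^^ 3) h \<xi> * x^3 / 6"
    using T h0 dh0 by (simp add: eval_nat_numeral fact_numeral)
  moreover have "\<bar>\<xi>\<bar> < \<bar>x\<bar>" using \<xi> by (auto split: if_splits)
  ultimately show ?thesis by blast
qed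

lemma cubic_remainder_tendsto:
  fixes r g :: "real \<Rightarrow> real"
  assumes g: "isCont g 0" and rem: "\<And>x. x \<noteq> 0 \<Longrightarrow> \<exists>\<xi>. \<bar>\<xi>\<bar> < \<bar>x\<bar> \<and> r x = g \<xi> * x^3 / 6"
  shows "((\<lambda>x. r x / x^3) \<longlongrightarrow> g 0 / 6) (at 0)"
proof -
  obtain \<xi> where \<xi>: "\<And>x. x \<noteq> 0 \<Longrightarrow> \<bar>\<xi> x\<bar> < \<bar>x\<bar> \<and> r x = g (\<xi> x) * x^3 / 6"
    using rem by metis
  have "((\<lambda>x. \<bar>x\<bar>) \<longlongrightarrow> 0) (at (0::real))"
    using tendsto_rabs[OF tendsto_ident_at[of 0 UNIV]] by simp
  moreover have "\<forall>\<^sub>F x in at 0. norm (\<xi> x) \<le> \<bar>x\<bar>"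
    unfolding eventually_at_filter using \<xi> by (intro always_eventually allI impI) (simp add: less_imp_le)
  ultimately have "(\<xi> \<longlongrightarrow> 0) (at 0)"
    by (rule Lim_null_comparison[rotated])
  hence "((\<lambda>x. g (\<xi> x) / 6) \<longlongrightarrow> g 0 / 6) (at 0)"
    by (intro tendsto_divide isCont_tendsto_compose[OF g]) auto
  moreover have "\<forall>\<^sub>F x in at 0. g (\<xi> x) / 6 = r x / x^3"
    unfolding eventually_at_filter using \<xi> by (intro always_eventually allI impI) simp
  ultimately show ?thesis
    by (rule Lim_transform_eventually)
qed

lemma cubic_remainder_bounded:
  fixes r g :: "real \<Rightarrow> real"
  assumes g: "continuous_on UNIV g" and rem: "\<And>x. x \<noteq> 0 \<Longrightarrow> \<exists>\<xi>. \<bar>\<xi>\<bar> < \<bar>x\<bar> \<and> r x = g \<xi> * x^3 / 6"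
    and r0: "r 0 = 0" and \<delta>: "\<delta> > 0"
  obtains C where "C \<ge> 0" and "\<And>x. \<bar>x\<bar> < \<delta> \<Longrightarrow> \<bar>r x\<bar> \<le> C * \<bar>x\<bar>^3"
proof -
  obtain y0 where y0: "\<And>y. y \<in> {-\<delta>..\<delta>} \<Longrightarrow> \<bar>g y\<bar> \<le> \<bar>g y0\<bar>"
    using continuous_attains_sup[OF compact_Icc _ continuous_on_subset[OF continuous_on_rabs[OF g]], of "-\<delta>" \<delta>] \<delta>
    by (metis atLeastAtMost_iff empty_iff neg_le_0_iff_le order.strict_implies_order subset_UNIV)
  have "\<bar>r x\<bar> \<le> \<bar>g y0\<bar> / 6 * \<bar>x\<bar>^3" if x: "\<bar>x\<bar> < \<delta>" for x
  proof (cases "x = 0")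
    case False
    then obtain \<xi> where "\<bar>\<xi>\<bar> < \<bar>x\<bar>" and r: "r x = g \<xi> * x^3 / 6"
      using rem by blast
    hence "\<bar>g \<xi>\<bar> \<le> \<bar>g y0\<bar>" using x by (intro y0) auto
    hence "\<bar>g \<xi>\<bar> * \<bar>x\<bar>^3 / 6 \<le> \<bar>g y0\<bar> * \<bar>x\<bar>^3 / 6"
      by (intro divide_right_mono mult_right_mono) auto
    thus ?thesis by (simp add: r abs_mult power_abs)
  qed (simp add: r0)
  thus ?thesis by (intro that[of "\<bar>g y0\<bar> / 6"]) auto
qed

lemma exists_uniform_bound_less_1:
  fixes f :: "real \<Rightarrow> real"
  assumes fcont: "continuous_on UNIV f" and fpos: "\<And>x. f x > 0" and lt1: "\<And>x. x \<noteq> 0 \<Longrightarrow> f x < 1"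
    and \<gamma>: "\<gamma> > 0" and M: "M > 0" and K: "K > 0"
    and tail: "\<And>x. \<bar>x\<bar> > M \<Longrightarrow> f x * \<bar>x\<bar> powr \<gamma> < K"
    and q1: "q < 1" and capq: "\<And>x. \<delta> \<le> \<bar>x\<bar> \<Longrightarrow> \<bar>x\<bar> \<le> M \<Longrightarrow> f x \<le> q"
  obtains s where "0 < s" "s < 1" "\<And>x. \<delta> \<le> \<bar>x\<bar> \<Longrightarrow> f x \<le> s"
proof -
  define R where "R = max M ((2*K) powr (1/\<gamma>))"
  have tailR: "f x < 1/2" if x: "\<bar>x\<bar> > R" for x
  proof -
    have "2*K = ((2*K) powr (1/\<gamma>)) powr \<gamma>" using \<gamma> K by (simp add: powr_powr)
    also have "\<dots> < \<bar>x\<bar> powr \<gamma>"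
      using x \<gamma> by (intro powr_less_mono2) (auto simp: R_def)
    finally have "f x * (2*K) \<le> f x * \<bar>x\<bar> powr \<gamma>" using fpos[of x] by (intro mult_left_mono) auto
    also have "\<dots> < K" using x by (intro tail) (auto simp: R_def)
    finally show ?thesis using K by (simp add: field_simps)
  qed
  define T where "T = {-R..-M} \<union> {M..R}"
  have cT: "compact T" unfolding T_def by (intro compact_Un compact_Icc)
  have nT: "T \<noteq> {}" by (auto simp: T_def R_def)
  obtain x0 where x0: "x0 \<in> T" and mx: "\<And>y. y \<in> T \<Longrightarrow> f y \<le> f x0"
    using continuous_attains_sup[OF cT nT continuous_on_subset[OF fcont]] by auto
  have "x0 \<noteq> 0" using x0 M by (auto simp: T_def)
  hence "f x0 < 1" by (rule lt1)
  show ?thesis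
  proof (rule that[of "max (max q (f x0)) (1/2)"])
    fix x assume x: "\<delta> \<le> \<bar>x\<bar>"
    show "f x \<le> max (max q (f x0)) (1/2)"
    proof (cases "\<bar>x\<bar> \<le> M")
      case True thus ?thesis using capq[OF x] by simp
    next
      case False
      show ?thesis
      proof (cases "\<bar>x\<bar> \<le> R")
        case True
        hence "x \<in> T" unfolding T_def using False by (cases "x \<ge> 0") auto
        thus ?thesis using mx[of x] by simp
      next
        case False
        thus ?thesis using tailR[of x] by simp
      qed
    qed
  qed (use q1 \<open>f x0 < 1\<close> in auto)
qed

lemma exists_powr_moments_integrable:
  fixes f :: "real \<Rightarrow> real"
  assumes fpos: "\<And>x. f x > 0" and fle1: "\<And>x. f x \<le> 1" and [measurable]: "f \<in> borel_measurable borel"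
    and \<gamma>: "\<gamma> > 0" and M: "M > 0" and K: "K > 0"
    and tail: "\<And>x. \<bar>x\<bar> > M \<Longrightarrow> f x * \<bar>x\<bar> powr \<gamma> < K"
  obtains \<beta>0 where "\<beta>0 > 0" "\<And>k. k \<le> 10 \<Longrightarrow> integrable lborel (\<lambda>x. \<bar>x\<bar>^k * f x powr \<beta>0)"
proof -
  define \<beta>0 where "\<beta>0 = 12 / \<gamma>"
  have b0: "\<beta>0 > 0" using \<gamma> by (simp add: \<beta>0_def)
  define R where "R = max M 1"
  have R: "R \<ge> 1" "R \<ge> M" by (auto simp: R_def)
  define w where "w x = R^10 * indicator {-R..R} x + 2 * K powr \<beta>0 * inverse (1 + x\<^sup>2)" for x :: real
  have "integrable lborel (\<lambda>x::real. inverse (1 + x\<^sup>2))"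
    using integrable_inverse_1_plus_square by (simp add: set_integrable_def einterval_eq_UNIV)
  hence wi: "integrable lborel w" unfolding w_def using R
    by (intro Bochner_Integration.integrable_add integrable_mult_right integrable_real_indicator)
       (auto simp: emeasure_lborel_Icc)
  have bound: "\<bar>x\<bar>^k * f x powr \<beta>0 \<le> w x" if k: "k \<le> 10" for x k
  proof (cases "\<bar>x\<bar> \<le> R")
    case True
    have "\<bar>x\<bar>^k \<le> R^k" using True by (intro power_mono) auto
    also have "\<dots> \<le> R^10" using R k by (intro power_increasing) auto
    finally have "\<bar>x\<bar>^k * f x powr \<beta>0 \<le> R^10 * 1"
      using b0 fpos[of x] fle1[of x] by (intro mult_mono powr_le1) auto
    also have "\<dots> \<le> w x" using True by (simp add: w_def indicator_def abs_le_iff)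
    finally show ?thesis .
  next
    case False
    hence x1: "\<bar>x\<bar> > 1" and xM: "\<bar>x\<bar> > M" using R by auto
    have "f x < K / \<bar>x\<bar> powr \<gamma>" using tail[OF xM] x1 by (simp add: field_simps)
    hence "f x powr \<beta>0 \<le> (K / \<bar>x\<bar> powr \<gamma>) powr \<beta>0"
      using b0 fpos[of x] by (intro powr_mono2) auto
    also have "\<dots> = K powr \<beta>0 / \<bar>x\<bar> powr (\<gamma> * \<beta>0)" by (simp add: powr_divide powr_powr)
    also have "\<gamma> * \<beta>0 = real 12" using \<gamma> by (simp add: \<beta>0_def)
    also have "\<bar>x\<bar> powr real 12 = \<bar>x\<bar>^12" using x1 by (intro powr_realpow) simp
    finally have "\<bar>x\<bar>^k * f x powr \<beta>0 \<le> \<bar>x\<bar>^10 * (K powr \<beta>0 / \<bar>x\<bar>^12)"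
      using x1 k by (intro mult_mono power_increasing) auto
    also have "\<dots> = K powr \<beta>0 / x\<^sup>2"
      using x1 by (simp add: field_simps power_abs power2_eq_square eval_nat_numeral)
    also have "\<dots> \<le> K powr \<beta>0 * (2 / (1 + x\<^sup>2))"
    proof -
      have "x\<^sup>2 \<ge> 1" using x1 abs_le_square_iff[of 1 x] by simp
      hence "1 / x\<^sup>2 \<le> 2 / (1 + x\<^sup>2)" by (simp add: divide_simps)
      hence "K powr \<beta>0 * (1 / x\<^sup>2) \<le> K powr \<beta>0 * (2 / (1 + x\<^sup>2))"
        by (intro mult_left_mono) auto
      thus ?thesis by simp
    qed
    also have "\<dots> \<le> w x" by (simp add: w_def field_simps)
    finally show ?thesis .
  qed
  show ?thesis
  proof (rule that[OF b0])
    fix k :: nat assume "k \<le> 10"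
    thus "integrable lborel (\<lambda>x. \<bar>x\<bar>^k * f x powr \<beta>0)"
      by (intro Bochner_Integration.integrable_bound[OF wi]) (use bound in \<open>auto intro!: AE_I2 simp: w_def\<close>)
  qed
qed

lemma ln_taylor_cubic:
  fixes f :: "real \<Rightarrow> real"
  defines "h \<equiv> (\<lambda>x. ln (f x))"
  assumes pos: "\<And>x. f x > 0" and diff: "\<And>k x. k < 4 \<Longrightarrow> (deriv ^^ k) f differentiable (at x)"
    and f0: "f 0 = 1" and df0: "deriv f 0 = 0"
  shows "continuous_on UNIV ((deriv ^^ 3) h)"
    and "\<And>x. x \<noteq> 0 \<Longrightarrow> \<exists>\<xi>. \<bar>\<xi>\<bar> < \<bar>x\<bar> \<and> ln (f x) - (deriv ^^ 2) h 0 * x\<^sup>2 / 2 = (deriv ^^ 3) h \<xi> * x^3 / 6"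
proof -
  note D = deriv_ln_iterates[OF pos diff, folded h_def]
  show "continuous_on UNIV ((deriv ^^ 3) h)" by (rule D(2))
  have "h 0 = 0" "deriv h 0 = 0"
    using D(3)[of 0] by (simp_all add: h_def f0 df0)
  fix x :: real assume "x \<noteq> 0"
  from taylor_cubic_at_0[OF D(1) \<open>h 0 = 0\<close> \<open>deriv h 0 = 0\<close> this]
  show "\<exists>\<xi>. \<bar>\<xi>\<bar> < \<bar>x\<bar> \<and> ln (f x) - (deriv ^^ 2) h 0 * x\<^sup>2 / 2 = (deriv ^^ 3) h \<xi> * x^3 / 6"
    unfolding h_def by (metis add_diff_cancel_left')
qed

theorem lemma1:
  fixes f :: "real \<Rightarrow> real" and L l :: real
  defines "h \<equiv> (\<lambda>x. ln (f x))"
  defines "H \<equiv> (deriv ^^ 2) h 0"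
  assumes pos: "\<And>x. f x > 0"
    and C5_diff: "\<And>k x. k < 5 \<Longrightarrow> (deriv ^^ k) f differentiable (at x)"
    and C5_cont: "continuous_on UNIV ((deriv ^^ 5) f)"
    and f0: "f 0 = 1"
    and df0: "deriv f 0 = 0"
    and maxim: "\<And>x. x \<noteq> 0 \<Longrightarrow> f x < f 0"
    and Hneg: "H < 0"
    and Lpos: "L > 0"
    and h5: "\<And>x. \<bar>(deriv ^^ 5) h x\<bar> < L"
    and tails_cap: "\<exists>\<gamma> M K \<delta>2. \<gamma> > 0 \<and> M > 0 \<and> K > 0 \<and>
        (\<forall>x. \<bar>x\<bar> > M \<longrightarrow> f x * \<bar>x\<bar> powr \<gamma> < K) \<and>
        0 < \<delta>2 \<and> \<delta>2 < M \<and>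
        (\<forall>x. \<bar>x\<bar> < \<delta>2 \<longrightarrow> f x \<le> exp (- x\<^sup>2 * \<bar>H\<bar> / 4)) \<and>
        (\<forall>x. \<delta>2 \<le> \<bar>x\<bar> \<and> \<bar>x\<bar> \<le> M \<longrightarrow> f x \<le> exp (- \<delta>2\<^sup>2 * \<bar>H\<bar> / 4))"
    and lpos: "l > 0"
  shows "weak_conv_m (\<lambda>d. W_law f H ((deriv ^^ 3) h 0) l d)
           (normal_law (- 15 * ((deriv ^^ 3) h 0)\<^sup>2 / (36 * l * \<bar>H\<bar> ^ 3))
                       (30 * ((deriv ^^ 3) h 0)\<^sup>2 / (36 * l * \<bar>H\<bar> ^ 3)))"
proof -
  obtain \<gamma> M K \<delta>2 where \<gamma>: "\<gamma> > 0" and M: "M > 0" and K: "K > 0"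
    and tail: "\<And>x. \<bar>x\<bar> > M \<Longrightarrow> f x * \<bar>x\<bar> powr \<gamma> < K" and \<delta>2: "0 < \<delta>2"
    and cap: "\<And>x. \<bar>x\<bar> < \<delta>2 \<Longrightarrow> f x \<le> exp (- x\<^sup>2 * \<bar>H\<bar> / 4)"
    and cap_far: "\<And>x. \<delta>2 \<le> \<bar>x\<bar> \<Longrightarrow> \<bar>x\<bar> \<le> M \<Longrightarrow> f x \<le> exp (- \<delta>2\<^sup>2 * \<bar>H\<bar> / 4)"
    using tails_cap by blast
  have fcont: "continuous_on UNIV f"
    using C5_diff[of 0] by (auto intro!: continuous_at_imp_continuous_on differentiable_imp_continuous_within)
  have lt1: "\<And>x. x \<noteq> 0 \<Longrightarrow> f x < 1" and fle1: "\<And>x. f x \<le> 1"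
    using maxim f0 by (force, metis less_eq_real_def)
  have "exp (- \<delta>2\<^sup>2 * \<bar>H\<bar> / 4) < 1"
    using \<delta>2 Hneg by (simp add: mult_pos_neg)
  then obtain s where s: "0 < s" "s < 1" "\<And>x. \<delta>2 \<le> \<bar>x\<bar> \<Longrightarrow> f x \<le> s"
    using exists_uniform_bound_less_1[OF fcont pos lt1 \<gamma> M K tail _ cap_far] by blast
  obtain \<beta>0 where \<beta>0: "\<beta>0 > 0" "\<And>k. k \<le> 10 \<Longrightarrow> integrable lborel (\<lambda>x. \<bar>x\<bar>^k * f x powr \<beta>0)"
    using exists_powr_moments_integrable[OF pos fle1 borel_measurable_continuous_onI[OF fcont] \<gamma> M K tail] by blast
  have "\<And>k x. k < 4 \<Longrightarrow> (deriv ^^ k) f differentiable (at x)"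
    using C5_diff by simp
  note taylor = ln_taylor_cubic[OF pos this f0 df0, folded h_def, folded H_def]
  obtain C where C: "C \<ge> 0" "\<And>x. \<bar>x\<bar> < \<delta>2 \<Longrightarrow> \<bar>ln (f x) - H * x\<^sup>2 / 2\<bar> \<le> C * \<bar>x\<bar>^3"
    using cubic_remainder_bounded[OF taylor _ \<delta>2] f0 by auto
  have "((\<lambda>x. (ln (f x) - H * x\<^sup>2 / 2) / x^3) \<longlongrightarrow> (deriv ^^ 3) h 0 / 6) (at 0)"
    using taylor by (intro cubic_remainder_tendsto) (simp_all add: continuous_on_eq_continuous_at)
  then interpret laplace_asymptotics f H "(deriv ^^ 3) h 0" \<delta>2 C s \<beta>0
    using pos fcont fle1 Hneg \<delta>2 C cap s \<beta>0 by unfold_locales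
  show ?thesis by (rule weak_conv_W_law[OF lpos])
qed

end
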